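(* Let $H=(H_p,\Delta,\epsilon,S,\pi)_{p\in G}$ be a crossed group-cograded weak Hopf quasigroup over a group $G$. Define its mirror $\widetilde H=(\widetilde H_p,\widetilde\Delta,\widetilde\epsilon,\widetilde S,\widetilde\pi)_{p\in G}$ as follows: (1) as an algebra, $\widetilde H_p=H_{p^{-1}}$ for every $p\in G$; (2) for $p,q\in G$ the comultiplication $\widetilde\Delta_{p,q}:\widetilde H_{pq}=H_{q^{-1}p^{-1}}\to \widetilde H_p\otimes\widetilde H_q=H_{p^{-1}}\otimes H_{q^{-1}}$ is $\widetilde\Delta_{p,q}=(\pi_q\otimes \mathrm{id}_{H_{q^{-1}}})\circ\Delta_{q^{-1}p^{-1}q,\,q^{-1}}$; (3) the counit is $\widetilde\epsilon=\epsilon:\widetilde H_e=H_e\to k$; (4) the antipode is $\widetilde S_p=\pi_p\circ S_{p^{-1}}:\widetilde H_p=H_{p^{-1}}\to H_p=\widetilde H_{p^{-1}}$; (5) the crossing is $\widetilde\pi_p=\pi_p$ (viewed as a map $\widetilde H_q=H_{q^{-1}}\to H_{pq^{-1}p^{-1}}=\widetilde H_{pqp^{-1}}$). Then $\widetilde H$ is again a crossed group-cograded weak Hopf quasigroup over $G$.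
   Context: Let $k$ be a field and $G$ a group with identity $e$. A group-cograded weak Hopf quasigroup $H$ over $G$ consists of a family $(H_p)_{p\in G}$ of unital, not necessarily associative, $k$-algebras with units $1_p$; $k$-linear maps $\Delta_{p,q}:H_{pq}\to H_p\otimes H_q$ ($p,q\in G$), written $\Delta_{p,q}(h)=h_{(1,p)}\otimes h_{(2,q)}$, which are coassociative, $(\Delta_{p,q}\otimes\mathrm{id})\Delta_{pq,r}=(\mathrm{id}\otimes\Delta_{q,r})\Delta_{p,qr}$ (iterated coproducts are written $h_{(1,p)}\otimes h_{(2,q)}\otimes h_{(3,r)}$, etc.); and a linear counit $\epsilon:H_e\to k$ with $(\epsilon\otimes\mathrm{id})\Delta_{e,p}=\mathrm{id}=(\mathrm{id}\otimes\epsilon)\Delta_{p,e}$; such that: (1) each $\Delta_{p,q}$ is multiplicative, and $(\Delta_{p,q}\otimes\mathrm{id})\Delta_{pq,r}(1_{pqr})=(\Delta_{p,q}(1_{pq})\otimes 1_r)(1_p\otimes\Delta_{q,r}(1_{qr}))=(1_p\otimes\Delta_{q,r}(1_{qr}))(\Delta_{p,q}(1_{pq})\otimes 1_r)$ for all $p,q,r$; (2) $\epsilon((gh)l)=\epsilon(g(hl))=\epsilon(gh_{(2,e)})\epsilon(h_{(1,e)}l)=\epsilon(gh_{(1,e)})\epsilon(h_{(2,e)}l)$ for $g,h,l\in H_e$; (3) writing $\Delta_{p,q}(1_{pq})=1_{(1,p)}\otimes 1_{(2,q)}$ and defining $\epsilon^t_p,\epsilon^s_p:H_e\to H_p$ by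 $\epsilon^t_p(h)=\epsilon(1_{(1,e)}h)1_{(2,p)}$ and $\epsilon^s_p(h)=1_{(1,p)}\epsilon(h1_{(2,e)})$, there is a family of linear maps $S_p:H_p\to H_{p^{-1}}$ (the antipode) with $S_p(h)=S_p(h_{(1,p)})\epsilon^t_{p^{-1}}(h_{(2,e)})=\epsilon^s_{p^{-1}}(h_{(1,e)})S_p(h_{(2,p)})$ for $h\in H_p$, and for all $h\in H_e$, $g\in H_p$: $S_{p^{-1}}(h_{(1,p^{-1})})(h_{(2,p)}g)=\epsilon^s_p(h)g$, $h_{(1,p)}(S_{p^{-1}}(h_{(2,p^{-1})})g)=\epsilon^t_p(h)g$, $(gh_{(1,p)})S_{p^{-1}}(h_{(2,p^{-1})})=g\epsilon^t_p(h)$, $(gS_{p^{-1}}(h_{(1,p^{-1})}))h_{(2,p)}=g\epsilon^s_p(h)$. It is crossed if it is equipped with a family of algebra isomorphisms $\pi_p:H_q\to H_{pqp^{-1}}$ ($p,q\in G$), the crossing, such that $(\pi_p\otimes\pi_p)\Delta_{q,r}=\Delta_{pqp^{-1},prp^{-1}}\pi_p$, $\epsilon\pi_p=\epsilon$ and $\pi_{pq}=\pi_p\pi_q$ for all $p,q,r\in G$. *)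

theory Defs
  imports Main "HOL.Vector_Spaces"
begin

text \<open>
  The group G is a type of class group_add (written additively: p + q is the
  product pq, - p the inverse, 0 the identity e).  All the algebras H_p live as k-subspaces H p of one ambient
  k-vector space (type 'h with scalar multiplication scale); each carries its own
  multiplication mu p and unit one p.  An element of H_p (x) H_q is represented
  by a finite list of pairs [(a_1,b_1),...,(a_n,b_n)] standing for the sum of the
  a_i (x) b_i.  Two such representatives denote the same tensor iff they agree under
  every bilinear form on H_p x H_q (over a field these separate tensors);
  likewise for triple tensors and trilinear forms.
\<close>

definition lin_on :: "('k::field \<Rightarrow> 'h::ab_group_add \<Rightarrow> 'h) \<Rightarrow> 'h set \<Rightarrow> ('h \<Rightarrow> 'h) \<Rightarrow> bool" where
  "lin_on scale A f \<longleftrightarrow>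
     (\<forall>x\<in>A. \<forall>y\<in>A. f (x + y) = f x + f y) \<and> (\<forall>c. \<forall>x\<in>A. f (scale c x) = scale c (f x))"

definition linform_on :: "('k::field \<Rightarrow> 'h::ab_group_add \<Rightarrow> 'h) \<Rightarrow> 'h set \<Rightarrow> ('h \<Rightarrow> 'k) \<Rightarrow> bool" where
  "linform_on scale A f \<longleftrightarrow>
     (\<forall>x\<in>A. \<forall>y\<in>A. f (x + y) = f x + f y) \<and> (\<forall>c. \<forall>x\<in>A. f (scale c x) = c * f x)"

definition bilin_on :: "('k::field \<Rightarrow> 'h::ab_group_add \<Rightarrow> 'h) \<Rightarrow> 'h set \<Rightarrow> 'h set \<Rightarrow> ('h \<Rightarrow> 'h \<Rightarrow> 'k) \<Rightarrow> bool" where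
  "bilin_on scale A B \<phi> \<longleftrightarrow>
     (\<forall>b\<in>B. linform_on scale A (\<lambda>a. \<phi> a b)) \<and> (\<forall>a\<in>A. linform_on scale B (\<lambda>b. \<phi> a b))"

definition trilin_on :: "('k::field \<Rightarrow> 'h::ab_group_add \<Rightarrow> 'h) \<Rightarrow> 'h set \<Rightarrow> 'h set \<Rightarrow> 'h set \<Rightarrow> ('h \<Rightarrow> 'h \<Rightarrow> 'h \<Rightarrow> 'k) \<Rightarrow> bool" where
  "trilin_on scale A B C \<phi> \<longleftrightarrow>
     (\<forall>b\<in>B. \<forall>c\<in>C. linform_on scale A (\<lambda>a. \<phi> a b c)) \<and>
     (\<forall>a\<in>A. \<forall>c\<in>C. linform_on scale B (\<lambda>b. \<phi> a b c)) \<and>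
     (\<forall>a\<in>A. \<forall>b\<in>B. linform_on scale C (\<lambda>c. \<phi> a b c))"

definition teq2 :: "('k::field \<Rightarrow> 'h::ab_group_add \<Rightarrow> 'h) \<Rightarrow> 'h set \<Rightarrow> 'h set \<Rightarrow> ('h \<times> 'h) list \<Rightarrow> ('h \<times> 'h) list \<Rightarrow> bool" where
  "teq2 scale A B xs ys \<longleftrightarrow> set xs \<subseteq> A \<times> B \<and> set ys \<subseteq> A \<times> B \<and>
     (\<forall>\<phi>. bilin_on scale A B \<phi> \<longrightarrow>
        sum_list (map (\<lambda>(a,b). \<phi> a b) xs) = sum_list (map (\<lambda>(a,b). \<phi> a b) ys))"

definition teq3 :: "('k::field \<Rightarrow> 'h::ab_group_add \<Rightarrow> 'h) \<Rightarrow> 'h set \<Rightarrow> 'h set \<Rightarrow> 'h set \<Rightarrow> ('h \<times> 'h \<times> 'h) list \<Rightarrow> ('h \<times> 'h \<times> 'h) list \<Rightarrow> bool" where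
  "teq3 scale A B C xs ys \<longleftrightarrow> set xs \<subseteq> A \<times> B \<times> C \<and> set ys \<subseteq> A \<times> B \<times> C \<and>
     (\<forall>\<phi>. trilin_on scale A B C \<phi> \<longrightarrow>
        sum_list (map (\<lambda>(a,b,c). \<phi> a b c) xs) = sum_list (map (\<lambda>(a,b,c). \<phi> a b c) ys))"

text \<open>(Delta1 (x) id) applied to a representative of an element of X (x) C.\<close>
definition comult_left :: "('h \<Rightarrow> ('h \<times> 'h) list) \<Rightarrow> ('h \<times> 'h) list \<Rightarrow> ('h \<times> 'h \<times> 'h) list" where
  "comult_left D xs = concat (map (\<lambda>(x,c). map (\<lambda>(a,b). (a,b,c)) (D x)) xs)"

text \<open>(id (x) Delta2) applied to a representative of an element of A (x) Y.\<close>
definition comult_right :: "('h \<Rightarrow> ('h \<times> 'h) list) \<Rightarrow> ('h \<times> 'h) list \<Rightarrow> ('h \<times> 'h \<times> 'h) list" where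
  "comult_right D xs = concat (map (\<lambda>(a,y). map (\<lambda>(b,c). (a,b,c)) (D y)) xs)"

definition tmult2 :: "('h \<Rightarrow> 'h \<Rightarrow> 'h) \<Rightarrow> ('h \<Rightarrow> 'h \<Rightarrow> 'h) \<Rightarrow> ('h \<times> 'h) list \<Rightarrow> ('h \<times> 'h) list \<Rightarrow> ('h \<times> 'h) list" where
  "tmult2 m1 m2 xs ys = concat (map (\<lambda>(a,b). map (\<lambda>(a',b'). (m1 a a', m2 b b')) ys) xs)"

definition tmult3 :: "('h \<Rightarrow> 'h \<Rightarrow> 'h) \<Rightarrow> ('h \<Rightarrow> 'h \<Rightarrow> 'h) \<Rightarrow> ('h \<Rightarrow> 'h \<Rightarrow> 'h) \<Rightarrow>
    ('h \<times> 'h \<times> 'h) list \<Rightarrow> ('h \<times> 'h \<times> 'h) list \<Rightarrow> ('h \<times> 'h \<times> 'h) list" where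
  "tmult3 m1 m2 m3 xs ys =
     concat (map (\<lambda>(a,b,c). map (\<lambda>(a',b',c'). (m1 a a', m2 b b', m3 c c')) ys) xs)"

text \<open>Family of unital, not necessarily associative, k-algebras (H_p, mu p, one p).\<close>
definition algebra_family ::
  "('k::field \<Rightarrow> 'h::ab_group_add \<Rightarrow> 'h) \<Rightarrow> ('g \<Rightarrow> 'h set) \<Rightarrow> ('g \<Rightarrow> 'h \<Rightarrow> 'h \<Rightarrow> 'h) \<Rightarrow> ('g \<Rightarrow> 'h) \<Rightarrow> bool" where
  "algebra_family scale H mu one \<longleftrightarrow>
     vector_space scale \<and>
     (\<forall>p. module.subspace scale (H p) \<and>
          (\<forall>x\<in>H p. \<forall>y\<in>H p. mu p x y \<in> H p) \<and>
          (\<forall>x\<in>H p. lin_on scale (H p) (\<lambda>y. mu p x y) \<and> lin_on scale (H p) (\<lambda>y. mu p y x)) \<and>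
          one p \<in> H p \<and>
          (\<forall>x\<in>H p. mu p (one p) x = x \<and> mu p x (one p) = x))"

definition epst :: "('k \<Rightarrow> 'h \<Rightarrow> 'h) \<Rightarrow> ('g::group_add \<Rightarrow> 'h \<Rightarrow> 'h \<Rightarrow> 'h) \<Rightarrow> ('g \<Rightarrow> 'h) \<Rightarrow>
    ('g \<Rightarrow> 'g \<Rightarrow> 'h \<Rightarrow> ('h \<times> 'h) list) \<Rightarrow> ('h \<Rightarrow> 'k) \<Rightarrow> 'g \<Rightarrow> 'h \<Rightarrow> 'h::monoid_add" where
  "epst scale mu one Delta eps p h =
     sum_list (map (\<lambda>(a,b). scale (eps (mu 0 a h)) b) (Delta 0 p (one p)))"

definition epss :: "('k \<Rightarrow> 'h \<Rightarrow> 'h) \<Rightarrow> ('g::group_add \<Rightarrow> 'h \<Rightarrow> 'h \<Rightarrow> 'h) \<Rightarrow> ('g \<Rightarrow> 'h) \<Rightarrow>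
    ('g \<Rightarrow> 'g \<Rightarrow> 'h \<Rightarrow> ('h \<times> 'h) list) \<Rightarrow> ('h \<Rightarrow> 'k) \<Rightarrow> 'g \<Rightarrow> 'h \<Rightarrow> 'h::monoid_add" where
  "epss scale mu one Delta eps p h =
     sum_list (map (\<lambda>(a,b). scale (eps (mu 0 h b)) a) (Delta p 0 (one p)))"

definition gc_whq ::
  "('k::field \<Rightarrow> 'h::ab_group_add \<Rightarrow> 'h) \<Rightarrow> ('g::group_add \<Rightarrow> 'h set) \<Rightarrow> ('g \<Rightarrow> 'h \<Rightarrow> 'h \<Rightarrow> 'h) \<Rightarrow> ('g \<Rightarrow> 'h) \<Rightarrow>
   ('g \<Rightarrow> 'g \<Rightarrow> 'h \<Rightarrow> ('h \<times> 'h) list) \<Rightarrow> ('h \<Rightarrow> 'k) \<Rightarrow> ('g \<Rightarrow> 'h \<Rightarrow> 'h) \<Rightarrow> bool" where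
  "gc_whq scale H mu one Delta eps S \<longleftrightarrow>
     algebra_family scale H mu one \<and>
     \<comment> \<open>Delta p q : H_(pq) \<rightarrow> H_p (x) H_q, k-linear\<close>
     (\<forall>p q. \<forall>h\<in>H (p + q). set (Delta p q h) \<subseteq> H p \<times> H q) \<and>
     (\<forall>p q. \<forall>x\<in>H (p + q). \<forall>y\<in>H (p + q).
        teq2 scale (H p) (H q) (Delta p q (x + y)) (Delta p q x @ Delta p q y)) \<and>
     (\<forall>p q c. \<forall>x\<in>H (p + q).
        teq2 scale (H p) (H q) (Delta p q (scale c x)) (map (\<lambda>(a,b). (scale c a, b)) (Delta p q x))) \<and>
     \<comment> \<open>coassociativity\<close>
     (\<forall>p q r. \<forall>h\<in>H (p + q + r).
        teq3 scale (H p) (H q) (H r) (comult_left (Delta p q) (Delta (p + q) r h))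
                                     (comult_right (Delta q r) (Delta p (q + r) h))) \<and>
     \<comment> \<open>counit\<close>
     linform_on scale (H 0) eps \<and>
     (\<forall>p. \<forall>h\<in>H p. sum_list (map (\<lambda>(a,b). scale (eps a) b) (Delta 0 p h)) = h \<and>
                  sum_list (map (\<lambda>(a,b). scale (eps b) a) (Delta p 0 h)) = h) \<and>
     \<comment> \<open>(1) multiplicativity and the unit axiom\<close>
     (\<forall>p q. \<forall>g\<in>H (p + q). \<forall>h\<in>H (p + q).
        teq2 scale (H p) (H q) (Delta p q (mu (p + q) g h))
                               (tmult2 (mu p) (mu q) (Delta p q g) (Delta p q h))) \<and>
     (\<forall>p q r.
        teq3 scale (H p) (H q) (H r) (comult_left (Delta p q) (Delta (p + q) r (one (p + q + r))))
          (tmult3 (mu p) (mu q) (mu r)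
             (map (\<lambda>(a,b). (a,b,one r)) (Delta p q (one (p + q))))
             (map (\<lambda>(b,c). (one p,b,c)) (Delta q r (one (q + r))))) \<and>
        teq3 scale (H p) (H q) (H r) (comult_left (Delta p q) (Delta (p + q) r (one (p + q + r))))
          (tmult3 (mu p) (mu q) (mu r)
             (map (\<lambda>(b,c). (one p,b,c)) (Delta q r (one (q + r))))
             (map (\<lambda>(a,b). (a,b,one r)) (Delta p q (one (p + q)))))) \<and>
     \<comment> \<open>(2) weak multiplicativity of the counit\<close>
     (\<forall>g\<in>H 0. \<forall>h\<in>H 0. \<forall>l\<in>H 0.
        eps (mu 0 (mu 0 g h) l) = eps (mu 0 g (mu 0 h l)) \<and>
        eps (mu 0 g (mu 0 h l)) = sum_list (map (\<lambda>(a,b). eps (mu 0 g b) * eps (mu 0 a l)) (Delta 0 0 h)) \<and>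
        eps (mu 0 g (mu 0 h l)) = sum_list (map (\<lambda>(a,b). eps (mu 0 g a) * eps (mu 0 b l)) (Delta 0 0 h))) \<and>
     \<comment> \<open>(3) the antipode S p : H_p \<rightarrow> H_(p^-1), k-linear\<close>
     (\<forall>p. (\<forall>h\<in>H p. S p h \<in> H (- p)) \<and> lin_on scale (H p) (S p)) \<and>
     (\<forall>p. \<forall>h\<in>H p.
        S p h = sum_list (map (\<lambda>(a,b). mu (- p) (S p a) (epst scale mu one Delta eps (- p) b)) (Delta p 0 h)) \<and>
        S p h = sum_list (map (\<lambda>(a,b). mu (- p) (epss scale mu one Delta eps (- p) a) (S p b)) (Delta 0 p h))) \<and>
     (\<forall>p. \<forall>h\<in>H 0. \<forall>g\<in>H p.
        sum_list (map (\<lambda>(a,b). mu p (S (- p) a) (mu p b g)) (Delta (- p) p h))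
          = mu p (epss scale mu one Delta eps p h) g \<and>
        sum_list (map (\<lambda>(a,b). mu p a (mu p (S (- p) b) g)) (Delta p (- p) h))
          = mu p (epst scale mu one Delta eps p h) g \<and>
        sum_list (map (\<lambda>(a,b). mu p (mu p g a) (S (- p) b)) (Delta p (- p) h))
          = mu p g (epst scale mu one Delta eps p h) \<and>
        sum_list (map (\<lambda>(a,b). mu p (mu p g (S (- p) a)) b) (Delta (- p) p h))
          = mu p g (epss scale mu one Delta eps p h))"

definition crossed_gc_whq ::
  "('k::field \<Rightarrow> 'h::ab_group_add \<Rightarrow> 'h) \<Rightarrow> ('g::group_add \<Rightarrow> 'h set) \<Rightarrow> ('g \<Rightarrow> 'h \<Rightarrow> 'h \<Rightarrow> 'h) \<Rightarrow> ('g \<Rightarrow> 'h) \<Rightarrow>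
   ('g \<Rightarrow> 'g \<Rightarrow> 'h \<Rightarrow> ('h \<times> 'h) list) \<Rightarrow> ('h \<Rightarrow> 'k) \<Rightarrow> ('g \<Rightarrow> 'h \<Rightarrow> 'h) \<Rightarrow>
   ('g \<Rightarrow> 'g \<Rightarrow> 'h \<Rightarrow> 'h) \<Rightarrow> bool" where
  "crossed_gc_whq scale H mu one Delta eps S pi \<longleftrightarrow>
     gc_whq scale H mu one Delta eps S \<and>
     (\<forall>p q. bij_betw (pi p q) (H q) (H (p + q - p)) \<and>
            lin_on scale (H q) (pi p q) \<and>
            (\<forall>x\<in>H q. \<forall>y\<in>H q. pi p q (mu q x y) = mu (p + q - p) (pi p q x) (pi p q y)) \<and>
            pi p q (one q) = one (p + q - p)) \<and>
     (\<forall>p q r. \<forall>h\<in>H (q + r).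
        teq2 scale (H (p + q - p)) (H (p + r - p))
          (map (\<lambda>(a,b). (pi p q a, pi p r b)) (Delta q r h))
          (Delta (p + q - p) (p + r - p) (pi p (q + r) h))) \<and>
     (\<forall>p. \<forall>h\<in>H 0. eps (pi p 0 h) = eps h) \<and>
     (\<forall>p q r. \<forall>h\<in>H r. pi (p + q) r h = pi p (q + r - q) (pi q r h))"

definition mirror_H :: "('g::group_add \<Rightarrow> 'h set) \<Rightarrow> 'g \<Rightarrow> 'h set" where
  "mirror_H H p = H (- p)"

definition mirror_mu :: "('g::group_add \<Rightarrow> 'h \<Rightarrow> 'h \<Rightarrow> 'h) \<Rightarrow> 'g \<Rightarrow> 'h \<Rightarrow> 'h \<Rightarrow> 'h" where
  "mirror_mu mu p = mu (- p)"

definition mirror_one :: "('g::group_add \<Rightarrow> 'h) \<Rightarrow> 'g \<Rightarrow> 'h" where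
  "mirror_one one p = one (- p)"

definition mirror_Delta :: "('g::group_add \<Rightarrow> 'g \<Rightarrow> 'h \<Rightarrow> 'h) \<Rightarrow> ('g \<Rightarrow> 'g \<Rightarrow> 'h \<Rightarrow> ('h \<times> 'h) list) \<Rightarrow>
    'g \<Rightarrow> 'g \<Rightarrow> 'h \<Rightarrow> ('h \<times> 'h) list" where
  "mirror_Delta pi Delta p q h =
     map (\<lambda>(a,b). (pi q (- q + - p + q) a, b)) (Delta (- q + - p + q) (- q) h)"

definition mirror_S :: "('g::group_add \<Rightarrow> 'g \<Rightarrow> 'h \<Rightarrow> 'h) \<Rightarrow> ('g \<Rightarrow> 'h \<Rightarrow> 'h) \<Rightarrow> 'g \<Rightarrow> 'h \<Rightarrow> 'h" where
  "mirror_S pi S p h = pi p p (S (- p) h)"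

definition mirror_pi :: "('g::group_add \<Rightarrow> 'g \<Rightarrow> 'h \<Rightarrow> 'h) \<Rightarrow> 'g \<Rightarrow> 'g \<Rightarrow> 'h \<Rightarrow> 'h" where
  "mirror_pi pi p q = pi p (- q)"

end

theory Submission
  imports Defs
begin

text \<open>
  Every axiom of the mirror is the corresponding axiom of H transported along the crossing.
  Since pi_e = id and pi_p pi_q = pi_pq, each pi_p is an algebra isomorphism with inverse
  pi_(p^-1), compatible with comultiplication and counit. The central identity is
  Delta~_(p,q) o pi_r = (pi_(qr) (x) pi_r) o Delta_((qr)^-1 p^-1 (qr), r^-1 q^-1 r) on
  H_(r^-1 (pq)^-1 r); with it, coassociativity and the unit axiom of the mirror are the images of
  those of H under pi_(qr) (x) pi_r (x) id. The counital maps of the mirror are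
  eps~^s_p = eps^s_(p^-1) and eps~^t_p = pi_(p^-1) o eps^t_(p^-1), and each antipode identity of
  the mirror is the corresponding identity of H in degree p^-1 conjugated by pi_(p^-1); for the two
  identities involving eps^s the compatibility of pi_p with Delta is used once more.

  Tensor identities are stated on list representatives under all bilinear forms; since linear
  functionals separate the points of a vector space, they then also hold under every vector-valued
  bilinear map.
\<close>

lemma vector_space_field_mult: "vector_space ((*) :: 'k::field \<Rightarrow> 'k \<Rightarrow> 'k)"
  by unfold_locales (simp_all add: algebra_simps)

lemma linear_functional_eq_1_exists:
  assumes vs: "vector_space sc" and v: "v \<noteq> 0"
  shows "\<exists>l. (\<forall>x y. l (x + y) = l x + l y) \<and> (\<forall>c x. l (sc c x) = (c::'k::field) * l x) \<and> l v = 1"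
proof -
  interpret vector_space_pair sc "(*) :: 'k \<Rightarrow> 'k \<Rightarrow> 'k"
    using vs vector_space_field_mult by (simp add: vector_space_pair_def)
  have "vs1.independent {v}"
    using v by (intro vs1.independent_insertI) (auto simp: vs1.independent_empty)
  from linear_independent_extend[OF this, of "\<lambda>_. 1"] obtain l
    where "Vector_Spaces.linear sc (*) l" "l v = 1" by auto
  then show ?thesis
    by (intro exI[of _ l]) (auto simp: module_hom_iff_linear[symmetric] module_hom.add module_hom.scale)
qed

lemma additive_sum_list:
  fixes l :: "'a::ab_group_add \<Rightarrow> 'b::ab_group_add"
  assumes "\<forall>x y. l (x + y) = l x + l y"
  shows "l (sum_list (map f xs)) = sum_list (map (\<lambda>x. l (f x)) xs)"
proof -
  have "l 0 = 0" using assms by (metis add_cancel_right_right add_0)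
  then show ?thesis using assms by (induction xs) auto
qed

definition bilinear_map_on ::
  "('k::field \<Rightarrow> 'h::ab_group_add \<Rightarrow> 'h) \<Rightarrow> 'h set \<Rightarrow> 'h set \<Rightarrow> ('h \<Rightarrow> 'h \<Rightarrow> 'h) \<Rightarrow> bool" where
  "bilinear_map_on sc A B F \<longleftrightarrow> (\<forall>b\<in>B. lin_on sc A (\<lambda>a. F a b)) \<and> (\<forall>a\<in>A. lin_on sc B (\<lambda>b. F a b))"

lemma teq2_sum_bilinear_map:
  assumes vs: "vector_space sc" and eq: "teq2 sc A B xs ys" and F: "bilinear_map_on sc A B F"
  shows "sum_list (map (\<lambda>(a,b). F a b) xs) = sum_list (map (\<lambda>(a,b). F a b) ys)"
proof (rule ccontr)
  let ?L = "sum_list (map (\<lambda>(a,b). F a b) xs)" and ?R = "sum_list (map (\<lambda>(a,b). F a b) ys)"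
  assume "?L \<noteq> ?R"
  then obtain l where add: "\<forall>x y. l (x + y) = l x + l y" and scale: "\<forall>c x. l (sc c x) = c * l x"
    and one: "l (?L - ?R) = 1"
    using linear_functional_eq_1_exists[OF vs, of "?L - ?R"] by auto
  have "bilin_on sc A B (\<lambda>a b. l (F a b))"
    using F add scale unfolding bilinear_map_on_def bilin_on_def lin_on_def linform_on_def by simp
  then have "sum_list (map (\<lambda>(a,b). l (F a b)) xs) = sum_list (map (\<lambda>(a,b). l (F a b)) ys)"
    using eq unfolding teq2_def by blast
  then have "l ?L = l ?R"
    unfolding additive_sum_list[OF add] by (simp add: split_def)
  moreover have "l (?L - ?R) = l ?L - l ?R"
    using add by (metis add_diff_cancel eq_diff_eq)
  ultimately show False using one by simp
qed

lemma linform_on_comp: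
  assumes "linform_on sc B \<phi>" and "lin_on sc A f" and "\<forall>x\<in>A. f x \<in> B"
  shows "linform_on sc A (\<lambda>x. \<phi> (f x))"
  using assms unfolding linform_on_def lin_on_def by auto

lemma teq2_map:
  assumes eq: "teq2 sc A B xs ys"
    and f: "lin_on sc A f" "\<forall>x\<in>A. f x \<in> A'" and g: "lin_on sc B g" "\<forall>x\<in>B. g x \<in> B'"
  shows "teq2 sc A' B' (map (\<lambda>(a,b). (f a, g b)) xs) (map (\<lambda>(a,b). (f a, g b)) ys)"
  unfolding teq2_def
proof (intro conjI allI impI)
  show "set (map (\<lambda>(a,b). (f a, g b)) xs) \<subseteq> A' \<times> B'" "set (map (\<lambda>(a,b). (f a, g b)) ys) \<subseteq> A' \<times> B'"
    using eq f g unfolding teq2_def by auto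
  fix \<phi> assume "bilin_on sc A' B' \<phi>"
  then have "bilin_on sc A B (\<lambda>a b. \<phi> (f a) (g b))"
    using f g unfolding bilin_on_def
    by (auto intro!: linform_on_comp[where f=f and B=A'] linform_on_comp[where f=g and B=B'])
  then have "sum_list (map (\<lambda>(a,b). \<phi> (f a) (g b)) xs) = sum_list (map (\<lambda>(a,b). \<phi> (f a) (g b)) ys)"
    using eq unfolding teq2_def by blast
  then show "sum_list (map (\<lambda>(a,b). \<phi> a b) (map (\<lambda>(a,b). (f a, g b)) xs)) =
             sum_list (map (\<lambda>(a,b). \<phi> a b) (map (\<lambda>(a,b). (f a, g b)) ys))"
    by (simp add: comp_def split_def)
qed

lemma teq3_map:
  assumes eq: "teq3 sc A B C xs ys"
    and f: "lin_on sc A f" "\<forall>x\<in>A. f x \<in> A'" and g: "lin_on sc B g" "\<forall>x\<in>B. g x \<in> B'"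
    and h: "lin_on sc C h" "\<forall>x\<in>C. h x \<in> C'"
  shows "teq3 sc A' B' C' (map (\<lambda>(a,b,c). (f a, g b, h c)) xs) (map (\<lambda>(a,b,c). (f a, g b, h c)) ys)"
  unfolding teq3_def
proof (intro conjI allI impI)
  show "set (map (\<lambda>(a,b,c). (f a, g b, h c)) xs) \<subseteq> A' \<times> B' \<times> C'"
       "set (map (\<lambda>(a,b,c). (f a, g b, h c)) ys) \<subseteq> A' \<times> B' \<times> C'"
    using eq f g h unfolding teq3_def by auto
  fix \<phi> assume "trilin_on sc A' B' C' \<phi>"
  then have "trilin_on sc A B C (\<lambda>a b c. \<phi> (f a) (g b) (h c))"
    using f g h unfolding trilin_on_def
    by (auto intro!: linform_on_comp[where f=f and B=A'] linform_on_comp[where f=g and B=B']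
        linform_on_comp[where f=h and B=C'])
  then have "sum_list (map (\<lambda>(a,b,c). \<phi> (f a) (g b) (h c)) xs) =
      sum_list (map (\<lambda>(a,b,c). \<phi> (f a) (g b) (h c)) ys)"
    using eq unfolding teq3_def by blast
  then show "sum_list (map (\<lambda>(a,b,c). \<phi> a b c) (map (\<lambda>(a,b,c). (f a, g b, h c)) xs)) =
             sum_list (map (\<lambda>(a,b,c). \<phi> a b c) (map (\<lambda>(a,b,c). (f a, g b, h c)) ys))"
    by (simp add: comp_def split_def)
qed

lemma lin_on_id: "lin_on sc A (\<lambda>x. x)"
  unfolding lin_on_def by simp

lemma teq2_sym: "teq2 sc A B xs ys \<Longrightarrow> teq2 sc A B ys xs"
  unfolding teq2_def by auto

lemma teq3_sym: "teq3 sc A B C xs ys \<Longrightarrow> teq3 sc A B C ys xs"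
  unfolding teq3_def by auto

lemma teq3_trans: "teq3 sc A B C xs ys \<Longrightarrow> teq3 sc A B C ys zs \<Longrightarrow> teq3 sc A B C xs zs"
  unfolding teq3_def by auto

lemma teq3_append:
  "teq3 sc A B C xs ys \<Longrightarrow> teq3 sc A B C xs' ys' \<Longrightarrow> teq3 sc A B C (xs @ xs') (ys @ ys')"
  unfolding teq3_def by auto

lemma teq3_extend_teq2:
  assumes eq: "teq2 sc A B xs ys" and "c \<in> C"
  shows "teq3 sc A B C (map (\<lambda>(a,b). (a,b,c)) xs) (map (\<lambda>(a,b). (a,b,c)) ys)"
  unfolding teq3_def
proof (intro conjI allI impI)
  show "set (map (\<lambda>(a,b). (a,b,c)) xs) \<subseteq> A \<times> B \<times> C" "set (map (\<lambda>(a,b). (a,b,c)) ys) \<subseteq> A \<times> B \<times> C"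
    using assms unfolding teq2_def by auto
  fix \<phi> assume "trilin_on sc A B C \<phi>"
  then have "bilin_on sc A B (\<lambda>a b. \<phi> a b c)"
    using \<open>c \<in> C\<close> unfolding trilin_on_def bilin_on_def by auto
  then have "sum_list (map (\<lambda>(a,b). \<phi> a b c) xs) = sum_list (map (\<lambda>(a,b). \<phi> a b c) ys)"
    using eq unfolding teq2_def by blast
  then show "sum_list (map (\<lambda>(a,b,c). \<phi> a b c) (map (\<lambda>(a,b). (a,b,c)) xs)) =
             sum_list (map (\<lambda>(a,b,c). \<phi> a b c) (map (\<lambda>(a,b). (a,b,c)) ys))"
    by (simp add: comp_def split_def)
qed

lemma comult_left_Cons:
  "comult_left D ((x, c) # L) = map (\<lambda>(a,b). (a,b,c)) (D x) @ comult_left D L"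
  by (simp add: comult_left_def)

lemma comult_left_cong:
  assumes "set L \<subseteq> X \<times> C" and "\<And>x. x \<in> X \<Longrightarrow> teq2 sc A B (D x) (D' x)"
  shows "teq3 sc A B C (comult_left D L) (comult_left D' L)"
  using assms(1)
proof (induction L)
  case Nil
  then show ?case by (simp add: comult_left_def teq3_def)
next
  case (Cons xc L)
  then show ?case
    by (cases xc) (auto simp: comult_left_Cons intro!: teq3_append teq3_extend_teq2 assms(2))
qed

lemma comult_left_map_arg:
  "comult_left D (map (\<lambda>(x,c). (f x, c)) L) = comult_left (\<lambda>x. D (f x)) L"
  by (simp add: comult_left_def comp_def split_def)

lemma comult_left_map_result:
  "comult_left (\<lambda>x. map (\<lambda>(a,b). (f a, g b)) (D x)) L = map (\<lambda>(a,b,c). (f a, g b, c)) (comult_left D L)"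
  by (induction L) (auto simp: comult_left_def comp_def split_def)

lemma comult_right_map_arg:
  "comult_right D (map (\<lambda>(a,y). (f a, y)) L) = map (\<lambda>(a,b,c). (f a, b, c)) (comult_right D L)"
  by (induction L) (auto simp: comult_right_def comp_def split_def)

lemma comult_right_map_result:
  "comult_right (\<lambda>y. map (\<lambda>(b,c). (g b, c)) (D y)) L = map (\<lambda>(a,b,c). (a, g b, c)) (comult_right D L)"
  by (induction L) (auto simp: comult_right_def comp_def split_def)

lemma sum_list_map_concat:
  "sum_list (map g (concat xss)) = (\<Sum>xs\<leftarrow>xss. sum_list (map g xs))"
  by (induction xss) auto

lemma sum_list_swap:
  fixes f :: "'a \<Rightarrow> 'b \<Rightarrow> 'c::comm_monoid_add"
  shows "(\<Sum>x\<leftarrow>xs. \<Sum>y\<leftarrow>ys. f x y) = (\<Sum>y\<leftarrow>ys. \<Sum>x\<leftarrow>xs. f x y)"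
  by (induction xs) (auto simp: sum_list_addf)

lemma sum_list_tmult3:
  fixes \<phi> :: "'a \<Rightarrow> 'a \<Rightarrow> 'a \<Rightarrow> 'c::comm_monoid_add"
  shows "(\<Sum>(a,b,c)\<leftarrow>tmult3 m1 m2 m3 xs ys. \<phi> a b c) =
    (\<Sum>(a,b,c)\<leftarrow>xs. \<Sum>(a',b',c')\<leftarrow>ys. \<phi> (m1 a a') (m2 b b') (m3 c c'))"
  unfolding tmult3_def sum_list_map_concat by (simp add: comp_def split_def)

lemma sum_list_tmult3_swap:
  fixes \<phi> :: "'a \<Rightarrow> 'a \<Rightarrow> 'a \<Rightarrow> 'c::comm_monoid_add"
  shows "(\<Sum>(a,b,c)\<leftarrow>tmult3 m1 m2 m3 xs ys. \<phi> a b c) =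
    (\<Sum>(a',b',c')\<leftarrow>ys. \<Sum>(a,b,c)\<leftarrow>xs. \<phi> (m1 a a') (m2 b b') (m3 c c'))"
  unfolding sum_list_tmult3
  using sum_list_swap[of "\<lambda>(a,b,c) (a',b',c'). \<phi> (m1 a a') (m2 b b') (m3 c c')" ys xs]
  by (simp add: split_def)

definition bilinear_op_on :: "('k::field \<Rightarrow> 'h::ab_group_add \<Rightarrow> 'h) \<Rightarrow> 'h set \<Rightarrow> ('h \<Rightarrow> 'h \<Rightarrow> 'h) \<Rightarrow> bool" where
  "bilinear_op_on sc A m \<longleftrightarrow> (\<forall>x\<in>A. \<forall>y\<in>A. m x y \<in> A) \<and> bilinear_map_on sc A A m"

lemma tmult3_in:
  assumes "set xs \<subseteq> A \<times> B \<times> C" "set ys \<subseteq> A \<times> B \<times> C"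
    and "bilinear_op_on sc A m1" "bilinear_op_on sc B m2" "bilinear_op_on sc C m3"
  shows "set (tmult3 m1 m2 m3 xs ys) \<subseteq> A \<times> B \<times> C"
proof -
  have "\<forall>x\<in>A. \<forall>y\<in>A. m1 x y \<in> A" "\<forall>x\<in>B. \<forall>y\<in>B. m2 x y \<in> B" "\<forall>x\<in>C. \<forall>y\<in>C. m3 x y \<in> C"
    using assms(3-5) unfolding bilinear_op_on_def by auto
  then show ?thesis using assms(1,2) unfolding tmult3_def by fastforce
qed

lemma tmult3_cong_left:
  assumes eq: "teq3 sc A B C xs xs'" and ys: "set ys \<subseteq> A \<times> B \<times> C"
    and m: "bilinear_op_on sc A m1" "bilinear_op_on sc B m2" "bilinear_op_on sc C m3"
  shows "teq3 sc A B C (tmult3 m1 m2 m3 xs ys) (tmult3 m1 m2 m3 xs' ys)"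
  unfolding teq3_def
proof (intro conjI allI impI)
  show "set (tmult3 m1 m2 m3 xs ys) \<subseteq> A \<times> B \<times> C" "set (tmult3 m1 m2 m3 xs' ys) \<subseteq> A \<times> B \<times> C"
    using eq unfolding teq3_def by (simp_all add: tmult3_in[OF _ ys m])
  fix \<phi> assume \<phi>: "trilin_on sc A B C \<phi>"
  have "(\<Sum>(a,b,c)\<leftarrow>xs. \<phi> (m1 a a') (m2 b b') (m3 c c')) = (\<Sum>(a,b,c)\<leftarrow>xs'. \<phi> (m1 a a') (m2 b b') (m3 c c'))"
    if "(a',b',c') \<in> set ys" for a' b' c'
  proof -
    have "teq3 sc A B C (map (\<lambda>(a,b,c). (m1 a a', m2 b b', m3 c c')) xs)
        (map (\<lambda>(a,b,c). (m1 a a', m2 b b', m3 c c')) xs')"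
      using that ys m unfolding bilinear_op_on_def bilinear_map_on_def by (intro teq3_map[OF eq]) auto
    then show ?thesis using \<phi> unfolding teq3_def by (auto simp: comp_def split_def)
  qed
  then show "(\<Sum>(a,b,c)\<leftarrow>tmult3 m1 m2 m3 xs ys. \<phi> a b c) = (\<Sum>(a,b,c)\<leftarrow>tmult3 m1 m2 m3 xs' ys. \<phi> a b c)"
    unfolding sum_list_tmult3_swap by (intro arg_cong[where f=sum_list] map_cong) auto
qed

lemma tmult3_cong_right:
  assumes eq: "teq3 sc A B C ys ys'" and xs: "set xs \<subseteq> A \<times> B \<times> C"
    and m: "bilinear_op_on sc A m1" "bilinear_op_on sc B m2" "bilinear_op_on sc C m3"
  shows "teq3 sc A B C (tmult3 m1 m2 m3 xs ys) (tmult3 m1 m2 m3 xs ys')"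
  unfolding teq3_def
proof (intro conjI allI impI)
  show "set (tmult3 m1 m2 m3 xs ys) \<subseteq> A \<times> B \<times> C" "set (tmult3 m1 m2 m3 xs ys') \<subseteq> A \<times> B \<times> C"
    using eq unfolding teq3_def by (simp_all add: tmult3_in[OF xs _ m])
  fix \<phi> assume \<phi>: "trilin_on sc A B C \<phi>"
  have "(\<Sum>(a',b',c')\<leftarrow>ys. \<phi> (m1 a a') (m2 b b') (m3 c c')) = (\<Sum>(a',b',c')\<leftarrow>ys'. \<phi> (m1 a a') (m2 b b') (m3 c c'))"
    if "(a,b,c) \<in> set xs" for a b c
  proof -
    have "teq3 sc A B C (map (\<lambda>(a',b',c'). (m1 a a', m2 b b', m3 c c')) ys)
        (map (\<lambda>(a',b',c'). (m1 a a', m2 b b', m3 c c')) ys')"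
      using that xs m unfolding bilinear_op_on_def bilinear_map_on_def by (intro teq3_map[OF eq]) auto
    then show ?thesis using \<phi> unfolding teq3_def by (auto simp: comp_def split_def)
  qed
  then show "(\<Sum>(a,b,c)\<leftarrow>tmult3 m1 m2 m3 xs ys. \<phi> a b c) = (\<Sum>(a,b,c)\<leftarrow>tmult3 m1 m2 m3 xs ys'. \<phi> a b c)"
    unfolding sum_list_tmult3 by (intro arg_cong[where f=sum_list] map_cong) auto
qed

lemma tmult3_map:
  assumes "\<forall>(a,b,c)\<in>set xs. \<forall>(a',b',c')\<in>set ys.
     f (m1 a a') = n1 (f a) (f a') \<and> g (m2 b b') = n2 (g b) (g b') \<and> h (m3 c c') = n3 (h c) (h c')"
  shows "map (\<lambda>(a,b,c). (f a, g b, h c)) (tmult3 m1 m2 m3 xs ys) =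
    tmult3 n1 n2 n3 (map (\<lambda>(a,b,c). (f a, g b, h c)) xs) (map (\<lambda>(a,b,c). (f a, g b, h c)) ys)"
  using assms unfolding tmult3_def
  by (auto simp: map_concat comp_def split_def intro!: arg_cong[where f=concat] map_cong)

lemma tmult2_map:
  assumes "\<forall>(a,b)\<in>set xs. \<forall>(a',b')\<in>set ys. f (m1 a a') = n1 (f a) (f a') \<and> g (m2 b b') = n2 (g b) (g b')"
  shows "map (\<lambda>(a,b). (f a, g b)) (tmult2 m1 m2 xs ys) =
    tmult2 n1 n2 (map (\<lambda>(a,b). (f a, g b)) xs) (map (\<lambda>(a,b). (f a, g b)) ys)"
  using assms unfolding tmult2_def
  by (auto simp: map_concat comp_def split_def intro!: arg_cong[where f=concat] map_cong)

(* G is not commutative: group indices are normalised with index_simps to sums of elements and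
   inverses, which the default simp rule a + - b = a - b would undo. *)
declare add_uminus_conv_diff[simp del]
lemmas index_simps = add.assoc diff_conv_add_uminus minus_add

locale crossed_gc_whq_setting =
  fixes scale :: "'k::field \<Rightarrow> 'h::ab_group_add \<Rightarrow> 'h"
    and H :: "'g::group_add \<Rightarrow> 'h set"
    and mu :: "'g \<Rightarrow> 'h \<Rightarrow> 'h \<Rightarrow> 'h"
    and one :: "'g \<Rightarrow> 'h"
    and Delta :: "'g \<Rightarrow> 'g \<Rightarrow> 'h \<Rightarrow> ('h \<times> 'h) list"
    and eps :: "'h \<Rightarrow> 'k"
    and S :: "'g \<Rightarrow> 'h \<Rightarrow> 'h"
    and pi :: "'g \<Rightarrow> 'g \<Rightarrow> 'h \<Rightarrow> 'h"
  assumes crossed: "crossed_gc_whq scale H mu one Delta eps S pi"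
begin

abbreviation "eps_t \<equiv> epst scale mu one Delta eps"
abbreviation "eps_s \<equiv> epss scale mu one Delta eps"

lemma gc_whq: "gc_whq scale H mu one Delta eps S"
  using crossed unfolding crossed_gc_whq_def by blast

lemma algebra_family: "algebra_family scale H mu one"
  using gc_whq unfolding gc_whq_def by blast

lemma
  shows vector_space: "vector_space scale"
    and subspace_H: "module.subspace scale (H p)"
    and mu_in_H: "x \<in> H p \<Longrightarrow> y \<in> H p \<Longrightarrow> mu p x y \<in> H p"
    and mu_lin_right: "x \<in> H p \<Longrightarrow> lin_on scale (H p) (\<lambda>y. mu p x y)"
    and mu_lin_left: "x \<in> H p \<Longrightarrow> lin_on scale (H p) (\<lambda>y. mu p y x)"
    and one_in_H: "one p \<in> H p"
  using algebra_family unfolding algebra_family_def by blast+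

lemma
  shows Delta_in_H[rule_format]: "\<forall>p q. \<forall>h\<in>H (p + q). set (Delta p q h) \<subseteq> H p \<times> H q"
    and Delta_add[rule_format]: "\<forall>p q. \<forall>x\<in>H (p + q). \<forall>y\<in>H (p + q).
      teq2 scale (H p) (H q) (Delta p q (x + y)) (Delta p q x @ Delta p q y)"
    and Delta_scale[rule_format]: "\<forall>p q c. \<forall>x\<in>H (p + q).
      teq2 scale (H p) (H q) (Delta p q (scale c x)) (map (\<lambda>(a,b). (scale c a, b)) (Delta p q x))"
    and Delta_coassoc[rule_format]: "\<forall>p q r. \<forall>h\<in>H (p + q + r).
      teq3 scale (H p) (H q) (H r) (comult_left (Delta p q) (Delta (p + q) r h))
        (comult_right (Delta q r) (Delta p (q + r) h))"
    and eps_linform: "linform_on scale (H 0) eps"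
    and counit[rule_format]: "\<forall>p. \<forall>h\<in>H p. sum_list (map (\<lambda>(a,b). scale (eps a) b) (Delta 0 p h)) = h \<and>
      sum_list (map (\<lambda>(a,b). scale (eps b) a) (Delta p 0 h)) = h"
    and Delta_mult[rule_format]: "\<forall>p q. \<forall>g\<in>H (p + q). \<forall>h\<in>H (p + q).
      teq2 scale (H p) (H q) (Delta p q (mu (p + q) g h)) (tmult2 (mu p) (mu q) (Delta p q g) (Delta p q h))"
    and Delta_unit[rule_format]: "\<forall>p q r.
      teq3 scale (H p) (H q) (H r) (comult_left (Delta p q) (Delta (p + q) r (one (p + q + r))))
        (tmult3 (mu p) (mu q) (mu r)
           (map (\<lambda>(a,b). (a,b,one r)) (Delta p q (one (p + q))))
           (map (\<lambda>(b,c). (one p,b,c)) (Delta q r (one (q + r))))) \<and>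
      teq3 scale (H p) (H q) (H r) (comult_left (Delta p q) (Delta (p + q) r (one (p + q + r))))
        (tmult3 (mu p) (mu q) (mu r)
           (map (\<lambda>(b,c). (one p,b,c)) (Delta q r (one (q + r))))
           (map (\<lambda>(a,b). (a,b,one r)) (Delta p q (one (p + q)))))"
    and eps_weak_mult[rule_format]: "\<forall>g\<in>H 0. \<forall>h\<in>H 0. \<forall>l\<in>H 0.
      eps (mu 0 (mu 0 g h) l) = eps (mu 0 g (mu 0 h l)) \<and>
      eps (mu 0 g (mu 0 h l)) = sum_list (map (\<lambda>(a,b). eps (mu 0 g b) * eps (mu 0 a l)) (Delta 0 0 h)) \<and>
      eps (mu 0 g (mu 0 h l)) = sum_list (map (\<lambda>(a,b). eps (mu 0 g a) * eps (mu 0 b l)) (Delta 0 0 h))"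
    and S_linear: "\<forall>p. (\<forall>h\<in>H p. S p h \<in> H (- p)) \<and> lin_on scale (H p) (S p)"
    and S_counital[rule_format]: "\<forall>p. \<forall>h\<in>H p.
      S p h = sum_list (map (\<lambda>(a,b). mu (- p) (S p a) (eps_t (- p) b)) (Delta p 0 h)) \<and>
      S p h = sum_list (map (\<lambda>(a,b). mu (- p) (eps_s (- p) a) (S p b)) (Delta 0 p h))"
    and antipode[rule_format]: "\<forall>p. \<forall>h\<in>H 0. \<forall>g\<in>H p.
      sum_list (map (\<lambda>(a,b). mu p (S (- p) a) (mu p b g)) (Delta (- p) p h)) = mu p (eps_s p h) g \<and>
      sum_list (map (\<lambda>(a,b). mu p a (mu p (S (- p) b) g)) (Delta p (- p) h)) = mu p (eps_t p h) g \<and>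
      sum_list (map (\<lambda>(a,b). mu p (mu p g a) (S (- p) b)) (Delta p (- p) h)) = mu p g (eps_t p h) \<and>
      sum_list (map (\<lambda>(a,b). mu p (mu p g (S (- p) a)) b) (Delta (- p) p h)) = mu p g (eps_s p h)"
  using gc_whq unfolding gc_whq_def by - (elim conjE, assumption)+

lemmas counit_left = counit[THEN conjunct1]
  and counit_right = counit[THEN conjunct2]
  and Delta_one_left = Delta_unit[THEN conjunct1]
  and Delta_one_right = Delta_unit[THEN conjunct2]
  and eps_mu_assoc = eps_weak_mult[THEN conjunct1]
  and eps_mu_Delta_swap = eps_weak_mult[THEN conjunct2, THEN conjunct1]
  and eps_mu_Delta = eps_weak_mult[THEN conjunct2, THEN conjunct2]
  and S_in_H = S_linear[THEN spec, THEN conjunct1, rule_format]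
  and S_lin = S_linear[THEN spec, THEN conjunct2]
  and S_epst = S_counital[THEN conjunct1]
  and S_epss = S_counital[THEN conjunct2]
  and antipode_left_epss = antipode[THEN conjunct1]
  and antipode_left_epst = antipode[THEN conjunct2, THEN conjunct1]
  and antipode_right_epst = antipode[THEN conjunct2, THEN conjunct2, THEN conjunct1]
  and antipode_right_epss = antipode[THEN conjunct2, THEN conjunct2, THEN conjunct2]

lemma
  shows pi_algebra_iso_conj: "\<forall>p q. bij_betw (pi p q) (H q) (H (p + q - p)) \<and> lin_on scale (H q) (pi p q) \<and>
      (\<forall>x\<in>H q. \<forall>y\<in>H q. pi p q (mu q x y) = mu (p + q - p) (pi p q x) (pi p q y)) \<and>
      pi p q (one q) = one (p + q - p)"
    and pi_Delta_conj[rule_format]: "\<forall>p q r. \<forall>h\<in>H (q + r).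
      teq2 scale (H (p + q - p)) (H (p + r - p))
        (map (\<lambda>(a,b). (pi p q a, pi p r b)) (Delta q r h)) (Delta (p + q - p) (p + r - p) (pi p (q + r) h))"
    and eps_pi[rule_format]: "\<forall>p. \<forall>h\<in>H 0. eps (pi p 0 h) = eps h"
    and pi_comp_conj[rule_format]: "\<forall>p q r. \<forall>h\<in>H r. pi (p + q) r h = pi p (q + r - q) (pi q r h)"
  using crossed unfolding crossed_gc_whq_def by - (elim conjE, assumption)+

lemma pi_bij: "bij_betw (pi p q) (H q) (H (p + q - p))"
  using pi_algebra_iso_conj by blast

lemma pi_lin: "lin_on scale (H q) (pi p q)"
  using pi_algebra_iso_conj by blast

lemma pi_mu: "x \<in> H q \<Longrightarrow> y \<in> H q \<Longrightarrow> q' = p + q - p \<Longrightarrow> pi p q (mu q x y) = mu q' (pi p q x) (pi p q y)"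
  using pi_algebra_iso_conj by blast

lemma pi_one: "q' = p + q - p \<Longrightarrow> pi p q (one q) = one q'"
  using pi_algebra_iso_conj by blast

lemma pi_Delta:
  "h \<in> H c \<Longrightarrow> c = a + b \<Longrightarrow> a' = p + a - p \<Longrightarrow> b' = p + b - p \<Longrightarrow>
    teq2 scale (H a') (H b') (map (\<lambda>(x,y). (pi p a x, pi p b y)) (Delta a b h)) (Delta a' b' (pi p c h))"
  using pi_Delta_conj by blast

lemma pi_comp: "h \<in> H r \<Longrightarrow> r' = q + r - q \<Longrightarrow> s = p + q \<Longrightarrow> pi p r' (pi q r h) = pi s r h"
  using pi_comp_conj by simp

lemma module: "module scale"
  using vector_space by (simp add: module_iff_vector_space)

lemma zero_in_H: "0 \<in> H p"
  using subspace_H by (simp add: module.subspace_def[OF module])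

lemma add_in_H: "x \<in> H p \<Longrightarrow> y \<in> H p \<Longrightarrow> x + y \<in> H p"
  using subspace_H by (simp add: module.subspace_def[OF module])

lemma scale_in_H: "x \<in> H p \<Longrightarrow> scale c x \<in> H p"
  using subspace_H by (simp add: module.subspace_def[OF module])

lemma sum_list_in_H: "(\<And>x. x \<in> set xs \<Longrightarrow> f x \<in> H p) \<Longrightarrow> sum_list (map f xs) \<in> H p"
  by (induction xs) (auto intro: add_in_H zero_in_H)

lemma lin_on_sum_list:
  assumes "lin_on scale (H p) F" and "\<And>x. x \<in> set xs \<Longrightarrow> f x \<in> H p"
  shows "F (sum_list (map f xs)) = (\<Sum>x\<leftarrow>xs. F (f x))"
proof -
  have "F 0 = 0"
    using assms(1) zero_in_H unfolding lin_on_def by (metis add_0 add_cancel_right_right)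
  show ?thesis
    using assms(2)
  proof (induction xs)
    case (Cons a xs)
    then have "sum_list (map f xs) \<in> H p" by (intro sum_list_in_H) auto
    with Cons assms(1) show ?case unfolding lin_on_def by simp
  qed (simp add: \<open>F 0 = 0\<close>)
qed

lemma mu_add_left: "x \<in> H p \<Longrightarrow> y \<in> H p \<Longrightarrow> z \<in> H p \<Longrightarrow> mu p (x + y) z = mu p x z + mu p y z"
  using mu_lin_left[of z p] unfolding lin_on_def by blast

lemma mu_add_right: "x \<in> H p \<Longrightarrow> y \<in> H p \<Longrightarrow> z \<in> H p \<Longrightarrow> mu p z (x + y) = mu p z x + mu p z y"
  using mu_lin_right[of z p] unfolding lin_on_def by blast

lemma mu_scale_left: "x \<in> H p \<Longrightarrow> z \<in> H p \<Longrightarrow> mu p (scale c x) z = scale c (mu p x z)"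
  using mu_lin_left[of z p] unfolding lin_on_def by blast

lemma mu_scale_right: "x \<in> H p \<Longrightarrow> z \<in> H p \<Longrightarrow> mu p z (scale c x) = scale c (mu p z x)"
  using mu_lin_right[of z p] unfolding lin_on_def by blast

lemma bilinear_op_on_mu: "bilinear_op_on scale (H p) (mu p)"
  unfolding bilinear_op_on_def bilinear_map_on_def using mu_in_H mu_lin_left mu_lin_right by blast

lemma eps_add: "x \<in> H 0 \<Longrightarrow> y \<in> H 0 \<Longrightarrow> eps (x + y) = eps x + eps y"
  using eps_linform unfolding linform_on_def by blast

lemma eps_scale: "x \<in> H 0 \<Longrightarrow> eps (scale c x) = c * eps x"
  using eps_linform unfolding linform_on_def by blast

lemma S_add: "x \<in> H p \<Longrightarrow> y \<in> H p \<Longrightarrow> S p (x + y) = S p x + S p y"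
  using S_lin[of p] unfolding lin_on_def by blast

lemma S_scale: "x \<in> H p \<Longrightarrow> S p (scale c x) = scale c (S p x)"
  using S_lin[of p] unfolding lin_on_def by blast

lemma S_uminus_in_H: "h \<in> H (- p) \<Longrightarrow> S (- p) h \<in> H p"
  using S_in_H[of h "- p"] by simp

lemma pi_add: "x \<in> H q \<Longrightarrow> y \<in> H q \<Longrightarrow> pi p q (x + y) = pi p q x + pi p q y"
  using pi_lin[of q p] unfolding lin_on_def by blast

lemma pi_scale: "x \<in> H q \<Longrightarrow> pi p q (scale c x) = scale c (pi p q x)"
  using pi_lin[of q p] unfolding lin_on_def by blast

lemma pi_in_H: "x \<in> H q \<Longrightarrow> q' = p + q - p \<Longrightarrow> pi p q x \<in> H q'"
  using pi_bij[of p q] by (auto dest: bij_betwE)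

lemma pi_sum_list:
  "(\<And>x. x \<in> set xs \<Longrightarrow> f x \<in> H q) \<Longrightarrow> pi p q (sum_list (map f xs)) = (\<Sum>x\<leftarrow>xs. pi p q (f x))"
  by (rule lin_on_sum_list[OF pi_lin])

lemma pi_zero: "x \<in> H q \<Longrightarrow> pi 0 q x = x"
proof -
  assume x: "x \<in> H q"
  have "pi 0 q (pi 0 q x) = pi 0 q x" and "pi 0 q x \<in> H q"
    using pi_comp[OF x, of q 0 0 0] pi_in_H[OF x, of q 0] by simp_all
  with x show ?thesis
    using bij_betw_imp_inj_on[OF pi_bij[of 0 q]] by (auto dest: inj_onD)
qed

lemma pi_inverse: "x \<in> H q \<Longrightarrow> q' = p + q - p \<Longrightarrow> p' + p = 0 \<Longrightarrow> pi p' q' (pi p q x) = x"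
  using pi_comp[of x q q' p 0 p'] pi_zero by simp

lemma eps_mu_pi: "a \<in> H 0 \<Longrightarrow> h \<in> H 0 \<Longrightarrow> eps (mu 0 (pi x 0 a) (pi x 0 h)) = eps (mu 0 a h)"
  using pi_mu[of a 0 h 0 x] eps_pi[of "mu 0 a h" x] mu_in_H by simp

lemma epst_in_H: "eps_t p h \<in> H p"
  unfolding epst_def using Delta_in_H[of "one p" 0 p] one_in_H
  by (intro sum_list_in_H) (auto intro: scale_in_H)

lemma epss_in_H: "eps_s p h \<in> H p"
  unfolding epss_def using Delta_in_H[of "one p" p 0] one_in_H
  by (intro sum_list_in_H) (auto intro: scale_in_H)

lemma bilinear_map_on_eps_mu_left:
  "k \<in> H 0 \<Longrightarrow> bilinear_map_on scale (H 0) B (\<lambda>a b. scale (eps (mu 0 a k)) b)"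
  using module.scale_left_distrib[OF module] module.scale_right_distrib[OF module]
    module.scale_scale[OF module]
  unfolding bilinear_map_on_def lin_on_def
  by (auto simp: mu_add_left mu_scale_left eps_add eps_scale mu_in_H scale_in_H mult.commute)

lemma bilinear_map_on_eps_mu_right:
  "k \<in> H 0 \<Longrightarrow> bilinear_map_on scale A (H 0) (\<lambda>a b. scale (eps (mu 0 k b)) a)"
  using module.scale_left_distrib[OF module] module.scale_right_distrib[OF module]
    module.scale_scale[OF module]
  unfolding bilinear_map_on_def lin_on_def
  by (auto simp: mu_add_right mu_scale_right eps_add eps_scale mu_in_H scale_in_H mult.commute)

lemma pi_epst:
  assumes h: "h \<in> H 0" and p': "p' = x + p - x"
  shows "pi x p (eps_t p h) = eps_t p' (pi x 0 h)"
proof -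
  have D: "set (Delta 0 p (one p)) \<subseteq> H 0 \<times> H p"
    using Delta_in_H[of "one p" 0 p] one_in_H by simp
  have "pi x p (eps_t p h) = (\<Sum>(a,b)\<leftarrow>Delta 0 p (one p). pi x p (scale (eps (mu 0 a h)) b))"
    unfolding epst_def using D by (subst pi_sum_list) (auto intro!: scale_in_H simp: split_def)
  also have "\<dots> = (\<Sum>(a,b)\<leftarrow>map (\<lambda>(a,b). (pi x 0 a, pi x p b)) (Delta 0 p (one p)).
      scale (eps (mu 0 a (pi x 0 h))) b)"
    using D h by (auto simp: pi_scale eps_mu_pi intro!: arg_cong[where f=sum_list] map_cong)
  also have "\<dots> = (\<Sum>(a,b)\<leftarrow>Delta 0 p' (pi x p (one p)). scale (eps (mu 0 a (pi x 0 h))) b)"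
    by (rule teq2_sum_bilinear_map[OF vector_space pi_Delta[OF one_in_H] bilinear_map_on_eps_mu_left])
      (use h p' in \<open>auto intro: pi_in_H\<close>)
  also have "\<dots> = eps_t p' (pi x 0 h)"
    unfolding epst_def pi_one[OF p'] ..
  finally show ?thesis .
qed

lemma pi_epss:
  assumes h: "h \<in> H 0" and p': "p' = x + p - x"
  shows "pi x p (eps_s p h) = eps_s p' (pi x 0 h)"
proof -
  have D: "set (Delta p 0 (one p)) \<subseteq> H p \<times> H 0"
    using Delta_in_H[of "one p" p 0] one_in_H by simp
  have "pi x p (eps_s p h) = (\<Sum>(a,b)\<leftarrow>Delta p 0 (one p). pi x p (scale (eps (mu 0 h b)) a))"
    unfolding epss_def using D by (subst pi_sum_list) (auto intro!: scale_in_H simp: split_def)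
  also have "\<dots> = (\<Sum>(a,b)\<leftarrow>map (\<lambda>(a,b). (pi x p a, pi x 0 b)) (Delta p 0 (one p)).
      scale (eps (mu 0 (pi x 0 h) b)) a)"
    using D h by (auto simp: pi_scale eps_mu_pi intro!: arg_cong[where f=sum_list] map_cong)
  also have "\<dots> = (\<Sum>(a,b)\<leftarrow>Delta p' 0 (pi x p (one p)). scale (eps (mu 0 (pi x 0 h) b)) a)"
    by (rule teq2_sum_bilinear_map[OF vector_space pi_Delta[OF one_in_H] bilinear_map_on_eps_mu_right])
      (use h p' in \<open>auto intro: pi_in_H\<close>)
  also have "\<dots> = eps_s p' (pi x 0 h)"
    unfolding epss_def pi_one[OF p'] ..
  finally show ?thesis .
qed

lemma teq2_map_pi_fst:
  assumes "teq2 scale (H a) (H b) xs ys" and "a' = p + a - p"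
  shows "teq2 scale (H a') (H b) (map (\<lambda>(x,y). (pi p a x, y)) xs) (map (\<lambda>(x,y). (pi p a x, y)) ys)"
  by (rule teq2_map[OF assms(1) pi_lin _ lin_on_id]) (use assms(2) pi_in_H in auto)

abbreviation "H' \<equiv> mirror_H H"
abbreviation "mu' \<equiv> mirror_mu mu"
abbreviation "one' \<equiv> mirror_one one"
abbreviation "Delta' \<equiv> mirror_Delta pi Delta"
abbreviation "S' \<equiv> mirror_S pi S"
abbreviation "pi' \<equiv> mirror_pi pi"
abbreviation "eps_t' \<equiv> epst scale mu' one' Delta' eps"
abbreviation "eps_s' \<equiv> epss scale mu' one' Delta' eps"

lemma mirror_algebra_family: "algebra_family scale H' mu' one'"
  using algebra_family unfolding algebra_family_def mirror_H_def mirror_mu_def mirror_one_def by blast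

lemma mirror_eps_linform: "linform_on scale (H' 0) eps"
  using eps_linform by (simp add: mirror_H_def)

lemma mirror_H_add: "H' (p + q) = H ((- q + - p + q) + - q)"
  by (simp add: mirror_H_def index_simps)

lemma mirror_Delta_in_H: "h \<in> H' (p + q) \<Longrightarrow> set (Delta' p q h) \<subseteq> H' p \<times> H' q"
  using Delta_in_H[of h "- q + - p + q" "- q"]
  unfolding mirror_H_add mirror_Delta_def by (auto intro!: pi_in_H simp: mirror_H_def index_simps)

lemma mirror_Delta_add:
  assumes "x \<in> H' (p + q)" and "y \<in> H' (p + q)"
  shows "teq2 scale (H' p) (H' q) (Delta' p q (x + y)) (Delta' p q x @ Delta' p q y)"
  using teq2_map_pi_fst[OF Delta_add[OF assms[unfolded mirror_H_add]], of "- p" q]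
  by (simp add: mirror_H_def mirror_Delta_def index_simps)

lemma mirror_Delta_scale:
  assumes "x \<in> H' (p + q)"
  shows "teq2 scale (H' p) (H' q) (Delta' p q (scale c x)) (map (\<lambda>(a,b). (scale c a, b)) (Delta' p q x))"
proof -
  let ?b = "- q + - p + q"
  have x: "x \<in> H (?b + - q)" using assms unfolding mirror_H_add .
  have "teq2 scale (H (- p)) (H (- q)) (Delta' p q (scale c x))
      (map (\<lambda>(a,b). (pi q ?b a, b)) (map (\<lambda>(a,b). (scale c a, b)) (Delta ?b (- q) x)))"
    using teq2_map_pi_fst[OF Delta_scale[OF x], of "- p" q] by (simp add: mirror_Delta_def index_simps)
  also have "map (\<lambda>(a,b). (pi q ?b a, b)) (map (\<lambda>(a,b). (scale c a, b)) (Delta ?b (- q) x)) =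
      map (\<lambda>(a,b). (scale c a, b)) (Delta' p q x)"
    using Delta_in_H[OF x] unfolding mirror_Delta_def by (auto simp: pi_scale)
  finally show ?thesis by (simp add: mirror_H_def)
qed

abbreviation pi_triple :: "'g \<Rightarrow> 'g \<Rightarrow> 'g \<Rightarrow> 'h \<times> 'h \<times> 'h \<Rightarrow> 'h \<times> 'h \<times> 'h" where
  "pi_triple p q r \<equiv> \<lambda>(x, y, z). (pi (q + r) (- (q + r) + - p + (q + r)) x, pi r (- r + - q + r) y, z)"

lemma teq3_map_pi_triple:
  "teq3 scale (H (- (q + r) + - p + (q + r))) (H (- r + - q + r)) (H (- r)) xs ys \<Longrightarrow>
    teq3 scale (H (- p)) (H (- q)) (H (- r)) (map (pi_triple p q r) xs) (map (pi_triple p q r) ys)"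
  by (erule teq3_map[OF _ pi_lin _ pi_lin _ lin_on_id]) (auto intro: pi_in_H simp: index_simps)

lemma mirror_Delta_pi:
  assumes a: "a \<in> H (- r + - (p + q) + r)"
  shows "teq2 scale (H (- p)) (H (- q)) (Delta' p q (pi r (- r + - (p + q) + r) a))
    (map (\<lambda>(x,y). (pi (q + r) (- (q + r) + - p + (q + r)) x, pi r (- r + - q + r) y))
      (Delta (- (q + r) + - p + (q + r)) (- r + - q + r) a))"
proof -
  let ?g = "- (q + r) + - p + (q + r)" and ?d = "- r + - q + r" and ?b = "- q + - p + q"
  have "teq2 scale (H ?b) (H (- q)) (map (\<lambda>(x,y). (pi r ?g x, pi r ?d y)) (Delta ?g ?d a))
      (Delta ?b (- q) (pi r (- r + - (p + q) + r) a))"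
    using a by (rule pi_Delta) (simp_all add: index_simps)
  from teq2_map_pi_fst[OF this, of "- p" q]
  have "teq2 scale (H (- p)) (H (- q)) (map (\<lambda>(x,y). (pi q ?b (pi r ?g x), pi r ?d y)) (Delta ?g ?d a))
      (Delta' p q (pi r (- r + - (p + q) + r) a))"
    unfolding mirror_Delta_def by (simp add: index_simps comp_def split_def)
  moreover have "set (Delta ?g ?d a) \<subseteq> H ?g \<times> H ?d"
    using a by (intro Delta_in_H) (simp add: index_simps)
  then have "map (\<lambda>(x,y). (pi q ?b (pi r ?g x), pi r ?d y)) (Delta ?g ?d a) =
      map (\<lambda>(x,y). (pi (q + r) ?g x, pi r ?d y)) (Delta ?g ?d a)"
    by (auto intro!: map_cong pi_comp simp: index_simps)
  ultimately show ?thesis by (metis teq2_sym)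
qed

lemma mirror_comult_left:
  assumes h: "h \<in> H (- (p + q + r))"
  shows "teq3 scale (H (- p)) (H (- q)) (H (- r)) (comult_left (Delta' p q) (Delta' (p + q) r h))
    (map (pi_triple p q r)
      (comult_left (Delta (- (q + r) + - p + (q + r)) (- r + - q + r)) (Delta (- r + - (p + q) + r) (- r) h)))"
proof -
  let ?g = "- (q + r) + - p + (q + r)" and ?d = "- r + - q + r" and ?a = "- r + - (p + q) + r"
  have D: "set (Delta ?a (- r) h) \<subseteq> H ?a \<times> H (- r)"
    using h by (intro Delta_in_H) (simp add: index_simps)
  have "teq3 scale (H (- p)) (H (- q)) (H (- r))
      (comult_left (\<lambda>a. Delta' p q (pi r ?a a)) (Delta ?a (- r) h))
      (comult_left (\<lambda>a. map (\<lambda>(x,y). (pi (q + r) ?g x, pi r ?d y)) (Delta ?g ?d a)) (Delta ?a (- r) h))"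
    by (rule comult_left_cong[OF D mirror_Delta_pi])
  then show ?thesis
    unfolding mirror_Delta_def[of pi Delta "p + q"] comult_left_map_arg comult_left_map_result .
qed

lemma mirror_comult_right:
  "comult_right (Delta' q r) (Delta' p (q + r) h) =
    map (pi_triple p q r) (comult_right (Delta (- r + - q + r) (- r)) (Delta (- (q + r) + - p + (q + r)) (- (q + r)) h))"
  unfolding mirror_Delta_def[of pi Delta p] comult_right_map_arg mirror_Delta_def comult_right_map_result
  by (simp add: comp_def split_def)

lemma mirror_Delta_coassoc:
  assumes "h \<in> H' (p + q + r)"
  shows "teq3 scale (H' p) (H' q) (H' r) (comult_left (Delta' p q) (Delta' (p + q) r h))
    (comult_right (Delta' q r) (Delta' p (q + r) h))"
proof -
  let ?g = "- (q + r) + - p + (q + r)" and ?d = "- r + - q + r" and ?a = "- r + - (p + q) + r"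
  have h: "h \<in> H (- (p + q + r))" using assms unfolding mirror_H_def .
  have "teq3 scale (H ?g) (H ?d) (H (- r)) (comult_left (Delta ?g ?d) (Delta ?a (- r) h))
      (comult_right (Delta ?d (- r)) (Delta ?g (- (q + r)) h))"
    using Delta_coassoc[of h ?g ?d "- r"] h by (simp add: index_simps)
  from mirror_comult_left[OF h] teq3_map_pi_triple[OF this] show ?thesis
    unfolding mirror_comult_right mirror_H_def by (rule teq3_trans)
qed

lemma mirror_Delta_zero_right: "h \<in> H (- p) \<Longrightarrow> Delta' p 0 h = Delta (- p) 0 h"
  using Delta_in_H[of h "- p" 0] unfolding mirror_Delta_def by (auto simp: pi_zero intro!: map_idI)

lemma mirror_Delta_zero_left: "Delta' 0 p h = map (\<lambda>(a,b). (pi p 0 a, b)) (Delta 0 (- p) h)"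
  unfolding mirror_Delta_def by simp

lemma mirror_counit_left:
  assumes "h \<in> H' p"
  shows "sum_list (map (\<lambda>(a,b). scale (eps a) b) (Delta' 0 p h)) = h"
proof -
  have h: "h \<in> H (0 + - p)" using assms by (simp add: mirror_H_def)
  have "sum_list (map (\<lambda>(a,b). scale (eps a) b) (Delta' 0 p h)) =
      sum_list (map (\<lambda>(a,b). scale (eps (pi p 0 a)) b) (Delta 0 (- p) h))"
    unfolding mirror_Delta_zero_left by (simp add: comp_def split_def)
  also have "\<dots> = sum_list (map (\<lambda>(a,b). scale (eps a) b) (Delta 0 (- p) h))"
    using Delta_in_H[OF h] by (auto simp: eps_pi intro!: arg_cong[where f=sum_list] map_cong)
  also have "\<dots> = h"
    using counit_left h by simp
  finally show ?thesis .
qed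

lemma mirror_counit_right: "h \<in> H' p \<Longrightarrow> sum_list (map (\<lambda>(a,b). scale (eps b) a) (Delta' p 0 h)) = h"
  by (simp add: mirror_H_def mirror_Delta_zero_right counit_right)

lemma mirror_Delta_mult:
  assumes "g \<in> H' (p + q)" and "h \<in> H' (p + q)"
  shows "teq2 scale (H' p) (H' q) (Delta' p q (mu' (p + q) g h))
    (tmult2 (mu' p) (mu' q) (Delta' p q g) (Delta' p q h))"
proof -
  let ?b = "- q + - p + q"
  have g: "g \<in> H (?b + - q)" and h: "h \<in> H (?b + - q)"
    using assms unfolding mirror_H_add by simp_all
  have "teq2 scale (H (- p)) (H (- q)) (Delta' p q (mu (- (p + q)) g h))
      (map (\<lambda>(x,y). (pi q ?b x, y)) (tmult2 (mu ?b) (mu (- q)) (Delta ?b (- q) g) (Delta ?b (- q) h)))"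
    using teq2_map_pi_fst[OF Delta_mult[OF g h], of "- p" q] by (simp add: mirror_Delta_def index_simps)
  also have "map (\<lambda>(x,y). (pi q ?b x, y)) (tmult2 (mu ?b) (mu (- q)) (Delta ?b (- q) g) (Delta ?b (- q) h)) =
      tmult2 (mu (- p)) (mu (- q)) (Delta' p q g) (Delta' p q h)"
    unfolding mirror_Delta_def
    by (rule tmult2_map) (use Delta_in_H[OF g] Delta_in_H[OF h] in \<open>auto intro!: pi_mu simp: index_simps\<close>)
  finally show ?thesis by (simp add: mirror_H_def mirror_mu_def)
qed

lemma mirror_unit_transport:
  assumes unit: "teq3 scale (H (- (q + r) + - p + (q + r))) (H (- r + - q + r)) (H (- r))
      (comult_left (Delta (- (q + r) + - p + (q + r)) (- r + - q + r))
        (Delta (- r + - (p + q) + r) (- r) (one (- (p + q + r)))))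
      (tmult3 (mu (- (q + r) + - p + (q + r))) (mu (- r + - q + r)) (mu (- r)) A B)"
    and A: "set A \<subseteq> H (- (q + r) + - p + (q + r)) \<times> H (- r + - q + r) \<times> H (- r)"
    and B: "set B \<subseteq> H (- (q + r) + - p + (q + r)) \<times> H (- r + - q + r) \<times> H (- r)"
  shows "teq3 scale (H (- p)) (H (- q)) (H (- r))
      (comult_left (Delta' p q) (Delta' (p + q) r (one (- (p + q + r)))))
      (tmult3 (mu (- p)) (mu (- q)) (mu (- r)) (map (pi_triple p q r) A) (map (pi_triple p q r) B))"
proof -
  let ?g = "- (q + r) + - p + (q + r)" and ?d = "- r + - q + r"
  have "pi (q + r) ?g (mu ?g x y) = mu (- p) (pi (q + r) ?g x) (pi (q + r) ?g y)"
    if "x \<in> H ?g" "y \<in> H ?g" for x y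
    using that by (rule pi_mu) (simp add: index_simps)
  moreover have "pi r ?d (mu ?d x y) = mu (- q) (pi r ?d x) (pi r ?d y)"
    if "x \<in> H ?d" "y \<in> H ?d" for x y
    using that by (rule pi_mu) (simp add: index_simps)
  ultimately have "map (pi_triple p q r) (tmult3 (mu ?g) (mu ?d) (mu (- r)) A B) =
      tmult3 (mu (- p)) (mu (- q)) (mu (- r)) (map (pi_triple p q r) A) (map (pi_triple p q r) B)"
    using A B by (intro tmult3_map) (auto simp: subset_iff)
  with teq3_trans[OF mirror_comult_left[OF one_in_H] teq3_map_pi_triple[OF unit]] show ?thesis
    by simp
qed

lemma pi_triple_unit_factor_left:
  "teq3 scale (H (- p)) (H (- q)) (H (- r))
    (map (\<lambda>(a,b). (a, b, one (- r))) (Delta' p q (one (- (p + q)))))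
    (map (pi_triple p q r) (map (\<lambda>(a,b). (a, b, one (- r)))
      (Delta (- (q + r) + - p + (q + r)) (- r + - q + r) (one (- r + - (p + q) + r)))))"
proof -
  have "pi r (- r + - (p + q) + r) (one (- r + - (p + q) + r)) = one (- (p + q))"
    by (rule pi_one) (simp add: index_simps)
  then show ?thesis
    using teq3_extend_teq2[OF mirror_Delta_pi[OF one_in_H, of p q r] one_in_H[of "- r"]]
    by (simp add: comp_def split_def)
qed

lemma pi_triple_unit_factor_right:
  "map (pi_triple p q r)
      (map (\<lambda>(b,c). (one (- (q + r) + - p + (q + r)), b, c)) (Delta (- r + - q + r) (- r) (one (- (q + r))))) =
    map (\<lambda>(b,c). (one (- p), b, c)) (Delta' q r (one (- (q + r))))"
proof -
  have "pi (q + r) (- (q + r) + - p + (q + r)) (one (- (q + r) + - p + (q + r))) = one (- p)"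
    by (rule pi_one) (simp add: index_simps)
  then show ?thesis
    unfolding mirror_Delta_def by (simp add: comp_def split_def)
qed

lemma mirror_Delta_one_left:
  "teq3 scale (H' p) (H' q) (H' r) (comult_left (Delta' p q) (Delta' (p + q) r (one' (p + q + r))))
    (tmult3 (mu' p) (mu' q) (mu' r)
      (map (\<lambda>(a,b). (a,b,one' r)) (Delta' p q (one' (p + q))))
      (map (\<lambda>(b,c). (one' p,b,c)) (Delta' q r (one' (q + r)))))"
proof -
  let ?g = "- (q + r) + - p + (q + r)" and ?d = "- r + - q + r" and ?a = "- r + - (p + q) + r"
  let ?X = "map (\<lambda>(a,b). (a,b,one (- r))) (Delta ?g ?d (one ?a))"
  let ?Y = "map (\<lambda>(b,c). (one ?g,b,c)) (Delta ?d (- r) (one (- (q + r))))"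
  let ?X' = "map (\<lambda>(a,b). (a,b,one (- r))) (Delta' p q (one (- (p + q))))"
  let ?Y' = "map (\<lambda>(b,c). (one (- p),b,c)) (Delta' q r (one (- (q + r))))"
  have e: "?g + ?d = ?a" "?d + - r = - (q + r)" "?a + - r = - (p + q + r)"
    by (simp_all add: index_simps)
  have X: "set ?X \<subseteq> H ?g \<times> H ?d \<times> H (- r)" and Y: "set ?Y \<subseteq> H ?g \<times> H ?d \<times> H (- r)"
    using Delta_in_H[of "one ?a" ?g ?d] Delta_in_H[of "one (- (q + r))" ?d "- r"] one_in_H
    unfolding e by auto
  have Y': "set ?Y' \<subseteq> H (- p) \<times> H (- q) \<times> H (- r)"
    using mirror_Delta_in_H[of "one (- (q + r))" q r] one_in_H by (auto simp: mirror_H_def)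
  have "teq3 scale (H ?g) (H ?d) (H (- r)) (comult_left (Delta ?g ?d) (Delta ?a (- r) (one (- (p + q + r)))))
      (tmult3 (mu ?g) (mu ?d) (mu (- r)) ?X ?Y)"
    using Delta_one_left[of ?g ?d "- r"] unfolding e .
  from mirror_unit_transport[OF this X Y]
  have "teq3 scale (H (- p)) (H (- q)) (H (- r))
      (comult_left (Delta' p q) (Delta' (p + q) r (one (- (p + q + r)))))
      (tmult3 (mu (- p)) (mu (- q)) (mu (- r)) (map (pi_triple p q r) ?X) ?Y')"
    unfolding pi_triple_unit_factor_right .
  moreover have "teq3 scale (H (- p)) (H (- q)) (H (- r))
      (tmult3 (mu (- p)) (mu (- q)) (mu (- r)) (map (pi_triple p q r) ?X) ?Y')
      (tmult3 (mu (- p)) (mu (- q)) (mu (- r)) ?X' ?Y')"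
    by (rule tmult3_cong_left[OF teq3_sym[OF pi_triple_unit_factor_left] Y' bilinear_op_on_mu bilinear_op_on_mu
      bilinear_op_on_mu])
  ultimately show ?thesis
    unfolding mirror_H_def mirror_mu_def mirror_one_def by (rule teq3_trans)
qed

lemma mirror_Delta_one_right:
  "teq3 scale (H' p) (H' q) (H' r) (comult_left (Delta' p q) (Delta' (p + q) r (one' (p + q + r))))
    (tmult3 (mu' p) (mu' q) (mu' r)
      (map (\<lambda>(b,c). (one' p,b,c)) (Delta' q r (one' (q + r))))
      (map (\<lambda>(a,b). (a,b,one' r)) (Delta' p q (one' (p + q)))))"
proof -
  let ?g = "- (q + r) + - p + (q + r)" and ?d = "- r + - q + r" and ?a = "- r + - (p + q) + r"
  let ?X = "map (\<lambda>(a,b). (a,b,one (- r))) (Delta ?g ?d (one ?a))"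
  let ?Y = "map (\<lambda>(b,c). (one ?g,b,c)) (Delta ?d (- r) (one (- (q + r))))"
  let ?X' = "map (\<lambda>(a,b). (a,b,one (- r))) (Delta' p q (one (- (p + q))))"
  let ?Y' = "map (\<lambda>(b,c). (one (- p),b,c)) (Delta' q r (one (- (q + r))))"
  have e: "?g + ?d = ?a" "?d + - r = - (q + r)" "?a + - r = - (p + q + r)"
    by (simp_all add: index_simps)
  have X: "set ?X \<subseteq> H ?g \<times> H ?d \<times> H (- r)" and Y: "set ?Y \<subseteq> H ?g \<times> H ?d \<times> H (- r)"
    using Delta_in_H[of "one ?a" ?g ?d] Delta_in_H[of "one (- (q + r))" ?d "- r"] one_in_H
    unfolding e by auto
  have Y': "set ?Y' \<subseteq> H (- p) \<times> H (- q) \<times> H (- r)"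
    using mirror_Delta_in_H[of "one (- (q + r))" q r] one_in_H by (auto simp: mirror_H_def)
  have "teq3 scale (H ?g) (H ?d) (H (- r)) (comult_left (Delta ?g ?d) (Delta ?a (- r) (one (- (p + q + r)))))
      (tmult3 (mu ?g) (mu ?d) (mu (- r)) ?Y ?X)"
    using Delta_one_right[of ?g ?d "- r"] unfolding e .
  from mirror_unit_transport[OF this Y X]
  have "teq3 scale (H (- p)) (H (- q)) (H (- r))
      (comult_left (Delta' p q) (Delta' (p + q) r (one (- (p + q + r)))))
      (tmult3 (mu (- p)) (mu (- q)) (mu (- r)) ?Y' (map (pi_triple p q r) ?X))"
    unfolding pi_triple_unit_factor_right .
  moreover have "teq3 scale (H (- p)) (H (- q)) (H (- r))
      (tmult3 (mu (- p)) (mu (- q)) (mu (- r)) ?Y' (map (pi_triple p q r) ?X))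
      (tmult3 (mu (- p)) (mu (- q)) (mu (- r)) ?Y' ?X')"
    by (rule tmult3_cong_right[OF teq3_sym[OF pi_triple_unit_factor_left] Y' bilinear_op_on_mu bilinear_op_on_mu
      bilinear_op_on_mu])
  ultimately show ?thesis
    unfolding mirror_H_def mirror_mu_def mirror_one_def by (rule teq3_trans)
qed

lemma mirror_eps_mu_assoc:
  "g \<in> H' 0 \<Longrightarrow> h \<in> H' 0 \<Longrightarrow> l \<in> H' 0 \<Longrightarrow> eps (mu' 0 (mu' 0 g h) l) = eps (mu' 0 g (mu' 0 h l))"
  by (simp add: mirror_H_def mirror_mu_def eps_mu_assoc)

lemma mirror_eps_mu_Delta_swap:
  "g \<in> H' 0 \<Longrightarrow> h \<in> H' 0 \<Longrightarrow> l \<in> H' 0 \<Longrightarrow>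
    eps (mu' 0 g (mu' 0 h l)) = sum_list (map (\<lambda>(a,b). eps (mu' 0 g b) * eps (mu' 0 a l)) (Delta' 0 0 h))"
  using mirror_Delta_zero_right[of h 0] by (simp add: mirror_H_def mirror_mu_def eps_mu_Delta_swap)

lemma mirror_eps_mu_Delta:
  "g \<in> H' 0 \<Longrightarrow> h \<in> H' 0 \<Longrightarrow> l \<in> H' 0 \<Longrightarrow>
    eps (mu' 0 g (mu' 0 h l)) = sum_list (map (\<lambda>(a,b). eps (mu' 0 g a) * eps (mu' 0 b l)) (Delta' 0 0 h))"
  using mirror_Delta_zero_right[of h 0] by (simp add: mirror_H_def mirror_mu_def eps_mu_Delta)

lemma mirror_epst:
  assumes h: "h \<in> H 0"
  shows "eps_t' p h = pi (- p) (- p) (eps_t (- p) h)"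
proof -
  have D: "set (Delta 0 (- p) (one (- p))) \<subseteq> H 0 \<times> H (- p)"
    using Delta_in_H[of "one (- p)" 0 "- p"] one_in_H by simp
  have h': "pi (- p) 0 h \<in> H 0"
    using pi_in_H[OF h, of 0 "- p"] by simp
  have "eps (mu 0 (pi p 0 a) h) = eps (mu 0 a (pi (- p) 0 h))" if "a \<in> H 0" for a
    using eps_mu_pi[OF that h', of p] pi_inverse[OF h, of 0 "- p" p] by simp
  then have "eps_t' p h = eps_t (- p) (pi (- p) 0 h)"
    using D unfolding epst_def mirror_mu_def mirror_one_def mirror_Delta_def
    by (auto simp: comp_def split_def intro!: arg_cong[where f=sum_list] map_cong)
  also have "\<dots> = pi (- p) (- p) (eps_t (- p) h)"
    by (rule pi_epst[OF h, symmetric]) (simp add: index_simps)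
  finally show ?thesis .
qed

lemma mirror_epss: "eps_s' p h = eps_s (- p) h"
  unfolding epss_def mirror_mu_def mirror_one_def mirror_Delta_zero_right[OF one_in_H] by simp

lemma mirror_S_in_H: "h \<in> H' p \<Longrightarrow> S' p h \<in> H' (- p)"
  unfolding mirror_H_def mirror_S_def by (auto intro!: pi_in_H S_uminus_in_H simp: index_simps)

lemma mirror_S_lin: "lin_on scale (H' p) (S' p)"
  using S_lin[of "- p"] S_uminus_in_H unfolding lin_on_def mirror_H_def mirror_S_def
  by (auto simp: pi_add pi_scale)

lemma mirror_S_epst:
  assumes "h \<in> H' p"
  shows "S' p h = sum_list (map (\<lambda>(a,b). mu' (- p) (S' p a) (eps_t' (- p) b)) (Delta' p 0 h))"
proof -
  have h: "h \<in> H (- p)" using assms unfolding mirror_H_def .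
  have D: "set (Delta (- p) 0 h) \<subseteq> H (- p) \<times> H 0" using Delta_in_H[of h "- p" 0] h by simp
  have p: "p = p + p - p" by (simp add: index_simps)
  have "S' p h = pi p p (sum_list (map (\<lambda>(a,b). mu p (S (- p) a) (eps_t p b)) (Delta (- p) 0 h)))"
    using S_epst[OF h] by (simp add: mirror_S_def)
  also have "\<dots> = sum_list (map (\<lambda>(a,b). pi p p (mu p (S (- p) a) (eps_t p b))) (Delta (- p) 0 h))"
    using D by (subst pi_sum_list) (auto simp: split_def intro!: mu_in_H S_uminus_in_H epst_in_H)
  also have "\<dots> = sum_list (map (\<lambda>(a,b). mu' (- p) (S' p a) (eps_t' (- p) b)) (Delta' p 0 h))"
    using D by (auto simp: mirror_Delta_zero_right[OF h] mirror_mu_def mirror_S_def mirror_epst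
        pi_mu[OF S_uminus_in_H epst_in_H p] intro!: arg_cong[where f=sum_list] map_cong)
  finally show ?thesis .
qed

lemma mirror_S_epss:
  assumes "h \<in> H' p"
  shows "S' p h = sum_list (map (\<lambda>(a,b). mu' (- p) (eps_s' (- p) a) (S' p b)) (Delta' 0 p h))"
proof -
  have h: "h \<in> H (- p)" using assms unfolding mirror_H_def .
  have D: "set (Delta 0 (- p) h) \<subseteq> H 0 \<times> H (- p)" using Delta_in_H[of h 0 "- p"] h by simp
  have p: "p = p + p - p" by (simp add: index_simps)
  have "S' p h = pi p p (sum_list (map (\<lambda>(a,b). mu p (eps_s p a) (S (- p) b)) (Delta 0 (- p) h)))"
    using S_epss[OF h] by (simp add: mirror_S_def)
  also have "\<dots> = sum_list (map (\<lambda>(a,b). pi p p (mu p (eps_s p a) (S (- p) b))) (Delta 0 (- p) h))"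
    using D by (subst pi_sum_list) (auto simp: split_def intro!: mu_in_H S_uminus_in_H epss_in_H)
  also have "\<dots> = sum_list (map (\<lambda>(a,b). mu' (- p) (eps_s' (- p) a) (S' p b)) (Delta' 0 p h))"
    using D unfolding mirror_Delta_zero_left
    by (auto simp: mirror_mu_def mirror_S_def mirror_epss pi_epss[OF _ p, symmetric]
        pi_mu[OF epss_in_H S_uminus_in_H p] intro!: arg_cong[where f=sum_list] map_cong)
  finally show ?thesis .
qed

lemma mirror_Delta_uminus_left: "Delta' (- p) p h = map (\<lambda>(a,b). (pi p p a, b)) (Delta p (- p) h)"
  unfolding mirror_Delta_def by simp

lemma mirror_Delta_uminus_right: "Delta' p (- p) h = map (\<lambda>(a,b). (pi (- p) (- p) a, b)) (Delta (- p) p h)"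
  unfolding mirror_Delta_def by simp

lemma mirror_antipode_left_epst:
  assumes "h \<in> H' 0" and "g \<in> H' p"
  shows "sum_list (map (\<lambda>(a,b). mu' p a (mu' p (S' (- p) b) g)) (Delta' p (- p) h)) = mu' p (eps_t' p h) g"
proof -
  have h: "h \<in> H 0" and g: "g \<in> H (- p)" using assms unfolding mirror_H_def by simp_all
  have D: "set (Delta (- p) p h) \<subseteq> H (- p) \<times> H p" using Delta_in_H[of h "- p" p] h by simp
  have m: "- p = - p + - p - - p" and m': "- p = p + - p - p" by (simp_all add: index_simps)
  define g' where "g' = pi p (- p) g"
  have g': "g' \<in> H (- p)" unfolding g'_def by (rule pi_in_H[OF g m'])
  have g_eq: "g = pi (- p) (- p) g'" unfolding g'_def by (rule pi_inverse[OF g m', symmetric]) simp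
  have "sum_list (map (\<lambda>(a,b). mu' p a (mu' p (S' (- p) b) g)) (Delta' p (- p) h)) =
      sum_list (map (\<lambda>(a,b). pi (- p) (- p) (mu (- p) a (mu (- p) (S p b) g'))) (Delta (- p) p h))"
    using D unfolding mirror_Delta_uminus_right g_eq
    by (auto simp: mirror_mu_def mirror_S_def pi_mu[OF _ _ m] mu_in_H S_in_H g'
        intro!: arg_cong[where f=sum_list] map_cong)
  also have "\<dots> = pi (- p) (- p) (sum_list (map (\<lambda>(a,b). mu (- p) a (mu (- p) (S p b) g')) (Delta (- p) p h)))"
    using D by (subst pi_sum_list) (auto simp: split_def intro!: mu_in_H S_in_H g')
  also have "\<dots> = pi (- p) (- p) (mu (- p) (eps_t (- p) h) g')"
    using antipode_left_epst[OF h g'] by simp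
  also have "\<dots> = mu' p (eps_t' p h) g"
    unfolding g_eq mirror_mu_def mirror_epst[OF h] using pi_mu[OF epst_in_H g' m] by simp
  finally show ?thesis .
qed

lemma mirror_antipode_right_epst:
  assumes "h \<in> H' 0" and "g \<in> H' p"
  shows "sum_list (map (\<lambda>(a,b). mu' p (mu' p g a) (S' (- p) b)) (Delta' p (- p) h)) = mu' p g (eps_t' p h)"
proof -
  have h: "h \<in> H 0" and g: "g \<in> H (- p)" using assms unfolding mirror_H_def by simp_all
  have D: "set (Delta (- p) p h) \<subseteq> H (- p) \<times> H p" using Delta_in_H[of h "- p" p] h by simp
  have m: "- p = - p + - p - - p" and m': "- p = p + - p - p" by (simp_all add: index_simps)
  define g' where "g' = pi p (- p) g"
  have g': "g' \<in> H (- p)" unfolding g'_def by (rule pi_in_H[OF g m'])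
  have g_eq: "g = pi (- p) (- p) g'" unfolding g'_def by (rule pi_inverse[OF g m', symmetric]) simp
  have "sum_list (map (\<lambda>(a,b). mu' p (mu' p g a) (S' (- p) b)) (Delta' p (- p) h)) =
      sum_list (map (\<lambda>(a,b). pi (- p) (- p) (mu (- p) (mu (- p) g' a) (S p b))) (Delta (- p) p h))"
    using D unfolding mirror_Delta_uminus_right g_eq
    by (auto simp: mirror_mu_def mirror_S_def pi_mu[OF _ _ m] mu_in_H S_in_H g'
        intro!: arg_cong[where f=sum_list] map_cong)
  also have "\<dots> = pi (- p) (- p) (sum_list (map (\<lambda>(a,b). mu (- p) (mu (- p) g' a) (S p b)) (Delta (- p) p h)))"
    using D by (subst pi_sum_list) (auto simp: split_def intro!: mu_in_H S_in_H g')
  also have "\<dots> = pi (- p) (- p) (mu (- p) g' (eps_t (- p) h))"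
    using antipode_right_epst[OF h g'] by simp
  also have "\<dots> = mu' p g (eps_t' p h)"
    unfolding g_eq mirror_mu_def mirror_epst[OF h] using pi_mu[OF g' epst_in_H m] by simp
  finally show ?thesis .
qed

lemma pi_sum_Delta_transport:
  assumes h: "h \<in> H 0" and F: "bilinear_map_on scale (H p) (H (- p)) F"
    and F_in: "\<And>x y. x \<in> H p \<Longrightarrow> y \<in> H (- p) \<Longrightarrow> F x y \<in> H (- p)"
  shows "sum_list (map (\<lambda>(a,b). pi (- p) (- p) (F (pi p p a) (pi p (- p) b))) (Delta p (- p) h)) =
    pi (- p) (- p) (sum_list (map (\<lambda>(a,b). F a b) (Delta p (- p) (pi p 0 h))))"
proof -
  have D: "set (Delta p (- p) h) \<subseteq> H p \<times> H (- p)" using Delta_in_H[of h p "- p"] h by simp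
  have "teq2 scale (H p) (H (- p)) (map (\<lambda>(a,b). (pi p p a, pi p (- p) b)) (Delta p (- p) h))
      (Delta p (- p) (pi p 0 h))"
    using h by (rule pi_Delta) (simp_all add: index_simps)
  from teq2_sum_bilinear_map[OF vector_space this F]
  have "sum_list (map (\<lambda>(a,b). F (pi p p a) (pi p (- p) b)) (Delta p (- p) h)) =
      sum_list (map (\<lambda>(a,b). F a b) (Delta p (- p) (pi p 0 h)))"
    by (simp add: comp_def split_def)
  moreover have "sum_list (map (\<lambda>(a,b). pi (- p) (- p) (F (pi p p a) (pi p (- p) b))) (Delta p (- p) h)) =
      pi (- p) (- p) (sum_list (map (\<lambda>(a,b). F (pi p p a) (pi p (- p) b)) (Delta p (- p) h)))"
    using D by (subst pi_sum_list) (auto simp: split_def index_simps intro!: F_in pi_in_H)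
  ultimately show ?thesis by simp
qed

lemma mirror_antipode_left_epss:
  assumes "h \<in> H' 0" and "g \<in> H' p"
  shows "sum_list (map (\<lambda>(a,b). mu' p (S' (- p) a) (mu' p b g)) (Delta' (- p) p h)) = mu' p (eps_s' p h) g"
proof -
  have h: "h \<in> H 0" and g: "g \<in> H (- p)" using assms unfolding mirror_H_def by simp_all
  have D: "set (Delta p (- p) h) \<subseteq> H p \<times> H (- p)" using Delta_in_H[of h p "- p"] h by simp
  have m: "- p = - p + - p - - p" and m': "- p = p + - p - p" by (simp_all add: index_simps)
  have h': "pi p 0 h \<in> H 0" using pi_in_H[OF h, of 0 p] by simp
  have cancel: "pi (- p) (- p) (pi p (- p) y) = y" if "y \<in> H (- p)" for y
    using that m' by (rule pi_inverse) simp
  define G where "G = pi p (- p) g"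
  have G: "G \<in> H (- p)" unfolding G_def by (rule pi_in_H[OF g m'])
  have F: "bilinear_map_on scale (H p) (H (- p)) (\<lambda>x y. mu (- p) (S p x) (mu (- p) y G))"
    using G unfolding bilinear_map_on_def lin_on_def
    by (auto simp: S_add S_scale mu_add_left mu_add_right mu_scale_left mu_scale_right S_in_H mu_in_H
        add_in_H scale_in_H)
  have "sum_list (map (\<lambda>(a,b). mu' p (S' (- p) a) (mu' p b g)) (Delta' (- p) p h)) =
      sum_list (map (\<lambda>(a,b). pi (- p) (- p) (mu (- p) (S p (pi p p a)) (mu (- p) (pi p (- p) b) G)))
        (Delta p (- p) h))"
    using D unfolding mirror_Delta_uminus_left G_def
    by (auto simp: mirror_mu_def mirror_S_def pi_mu[OF _ _ m] mu_in_H S_in_H pi_in_H g cancel index_simps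
        intro!: arg_cong[where f=sum_list] map_cong)
  also have "\<dots> = pi (- p) (- p) (sum_list (map (\<lambda>(a,b). mu (- p) (S p a) (mu (- p) b G))
      (Delta p (- p) (pi p 0 h))))"
    by (rule pi_sum_Delta_transport[OF h F]) (auto intro: mu_in_H S_in_H G)
  also have "\<dots> = pi (- p) (- p) (mu (- p) (eps_s (- p) (pi p 0 h)) G)"
    using antipode_left_epss[OF h' G] by simp
  also have "\<dots> = pi (- p) (- p) (pi p (- p) (mu (- p) (eps_s (- p) h) g))"
    unfolding G_def pi_mu[OF epss_in_H g m'] pi_epss[OF h m'] ..
  also have "\<dots> = mu' p (eps_s' p h) g"
    by (simp add: cancel mu_in_H epss_in_H g mirror_mu_def mirror_epss)
  finally show ?thesis .
qed

lemma mirror_antipode_right_epss: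
  assumes "h \<in> H' 0" and "g \<in> H' p"
  shows "sum_list (map (\<lambda>(a,b). mu' p (mu' p g (S' (- p) a)) b) (Delta' (- p) p h)) = mu' p g (eps_s' p h)"
proof -
  have h: "h \<in> H 0" and g: "g \<in> H (- p)" using assms unfolding mirror_H_def by simp_all
  have D: "set (Delta p (- p) h) \<subseteq> H p \<times> H (- p)" using Delta_in_H[of h p "- p"] h by simp
  have m: "- p = - p + - p - - p" and m': "- p = p + - p - p" by (simp_all add: index_simps)
  have h': "pi p 0 h \<in> H 0" using pi_in_H[OF h, of 0 p] by simp
  have cancel: "pi (- p) (- p) (pi p (- p) y) = y" if "y \<in> H (- p)" for y
    using that m' by (rule pi_inverse) simp
  define G where "G = pi p (- p) g"
  have G: "G \<in> H (- p)" unfolding G_def by (rule pi_in_H[OF g m'])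
  have F: "bilinear_map_on scale (H p) (H (- p)) (\<lambda>x y. mu (- p) (mu (- p) G (S p x)) y)"
    using G unfolding bilinear_map_on_def lin_on_def
    by (auto simp: S_add S_scale mu_add_left mu_add_right mu_scale_left mu_scale_right S_in_H mu_in_H
        add_in_H scale_in_H)
  have "sum_list (map (\<lambda>(a,b). mu' p (mu' p g (S' (- p) a)) b) (Delta' (- p) p h)) =
      sum_list (map (\<lambda>(a,b). pi (- p) (- p) (mu (- p) (mu (- p) G (S p (pi p p a))) (pi p (- p) b)))
        (Delta p (- p) h))"
    using D unfolding mirror_Delta_uminus_left G_def
    by (auto simp: mirror_mu_def mirror_S_def pi_mu[OF _ _ m] mu_in_H S_in_H pi_in_H g cancel index_simps
        intro!: arg_cong[where f=sum_list] map_cong)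
  also have "\<dots> = pi (- p) (- p) (sum_list (map (\<lambda>(a,b). mu (- p) (mu (- p) G (S p a)) b)
      (Delta p (- p) (pi p 0 h))))"
    by (rule pi_sum_Delta_transport[OF h F]) (auto intro: mu_in_H S_in_H G)
  also have "\<dots> = pi (- p) (- p) (mu (- p) G (eps_s (- p) (pi p 0 h)))"
    using antipode_right_epss[OF h' G] by simp
  also have "\<dots> = pi (- p) (- p) (pi p (- p) (mu (- p) g (eps_s (- p) h)))"
    unfolding G_def pi_mu[OF g epss_in_H m'] pi_epss[OF h m'] ..
  also have "\<dots> = mu' p g (eps_s' p h)"
    by (simp add: cancel mu_in_H epss_in_H g mirror_mu_def mirror_epss)
  finally show ?thesis .
qed

lemma mirror_pi_bij: "bij_betw (pi' p q) (H' q) (H' (p + q - p))"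
  using pi_bij[of p "- q"] by (simp add: mirror_pi_def mirror_H_def index_simps)

lemma mirror_pi_lin: "lin_on scale (H' q) (pi' p q)"
  using pi_lin by (simp add: mirror_pi_def mirror_H_def)

lemma mirror_pi_mu:
  "x \<in> H' q \<Longrightarrow> y \<in> H' q \<Longrightarrow> pi' p q (mu' q x y) = mu' (p + q - p) (pi' p q x) (pi' p q y)"
  unfolding mirror_pi_def mirror_H_def mirror_mu_def by (rule pi_mu) (simp_all add: index_simps)

lemma mirror_pi_one: "pi' p q (one' q) = one' (p + q - p)"
  unfolding mirror_pi_def mirror_one_def by (rule pi_one) (simp add: index_simps)

lemma mirror_eps_pi: "h \<in> H' 0 \<Longrightarrow> eps (pi' p 0 h) = eps h"
  by (simp add: mirror_pi_def mirror_H_def eps_pi)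

lemma mirror_pi_comp: "h \<in> H' r \<Longrightarrow> pi' (p + q) r h = pi' p (q + r - q) (pi' q r h)"
  unfolding mirror_pi_def mirror_H_def by (rule pi_comp[symmetric]) (simp_all add: index_simps)

lemma mirror_pi_Delta:
  assumes "h \<in> H' (q + r)"
  shows "teq2 scale (H' (p + q - p)) (H' (p + r - p))
    (map (\<lambda>(a,b). (pi' p q a, pi' p r b)) (Delta' q r h)) (Delta' (p + q - p) (p + r - p) (pi' p (q + r) h))"
proof -
  let ?d = "- r + - q + r" and ?q' = "p + q - p" and ?r' = "p + r - p"
  let ?d' = "- ?r' + - ?q' + ?r'"
  have h: "h \<in> H (- (q + r))" using assms unfolding mirror_H_def .
  have "teq2 scale (H ?d') (H (- ?r')) (map (\<lambda>(x,y). (pi p ?d x, pi p (- r) y)) (Delta ?d (- r) h))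
      (Delta ?d' (- ?r') (pi p (- (q + r)) h))"
    using h by (rule pi_Delta) (simp_all add: index_simps)
  from teq2_map_pi_fst[OF this, of "- ?q'" ?r']
  have transported: "teq2 scale (H (- ?q')) (H (- ?r'))
      (map (\<lambda>(x,y). (pi ?r' ?d' (pi p ?d x), pi p (- r) y)) (Delta ?d (- r) h))
      (Delta' ?q' ?r' (pi p (- (q + r)) h))"
    unfolding mirror_Delta_def by (simp add: comp_def split_def index_simps)
  have "pi ?r' ?d' (pi p ?d x) = pi p (- q) (pi r ?d x)" if "x \<in> H ?d" for x
  proof -
    have "pi ?r' ?d' (pi p ?d x) = pi (p + r) ?d x"
      using that by (rule pi_comp) (simp_all add: index_simps)
    also have "\<dots> = pi p (- q) (pi r ?d x)"
      using that by (rule pi_comp[symmetric]) (simp_all add: index_simps)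
    finally show ?thesis .
  qed
  moreover have "set (Delta ?d (- r) h) \<subseteq> H ?d \<times> H (- r)"
    using h by (intro Delta_in_H) (simp add: index_simps)
  ultimately have "map (\<lambda>(x,y). (pi ?r' ?d' (pi p ?d x), pi p (- r) y)) (Delta ?d (- r) h) =
      map (\<lambda>(a,b). (pi' p q a, pi' p r b)) (Delta' q r h)"
    unfolding mirror_Delta_def mirror_pi_def by (auto intro!: map_cong)
  with transported show ?thesis
    by (simp add: mirror_H_def mirror_pi_def)
qed

end

theorem proposition3p3:
  fixes scale :: "'k::field \<Rightarrow> 'h::ab_group_add \<Rightarrow> 'h"
    and H :: "'g::group_add \<Rightarrow> 'h set"
    and mu :: "'g \<Rightarrow> 'h \<Rightarrow> 'h \<Rightarrow> 'h"
    and one :: "'g \<Rightarrow> 'h"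
    and Delta :: "'g \<Rightarrow> 'g \<Rightarrow> 'h \<Rightarrow> ('h \<times> 'h) list"
    and eps :: "'h \<Rightarrow> 'k"
    and S :: "'g \<Rightarrow> 'h \<Rightarrow> 'h"
    and pi :: "'g \<Rightarrow> 'g \<Rightarrow> 'h \<Rightarrow> 'h"
  assumes "crossed_gc_whq scale H mu one Delta eps S pi"
  shows "crossed_gc_whq scale (mirror_H H) (mirror_mu mu) (mirror_one one)
           (mirror_Delta pi Delta) eps (mirror_S pi S) (mirror_pi pi)"
proof -
  interpret crossed_gc_whq_setting scale H mu one Delta eps S pi
    using assms by (rule crossed_gc_whq_setting.intro)
  show ?thesis
    unfolding crossed_gc_whq_def gc_whq_def
    by (intro conjI allI ballI mirror_algebra_family mirror_Delta_in_H mirror_Delta_add mirror_Delta_scale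
        mirror_Delta_coassoc mirror_eps_linform mirror_counit_left mirror_counit_right mirror_Delta_mult
        mirror_Delta_one_left mirror_Delta_one_right mirror_eps_mu_assoc mirror_eps_mu_Delta_swap
        mirror_eps_mu_Delta mirror_S_in_H mirror_S_lin mirror_S_epst mirror_S_epss
        mirror_antipode_left_epss mirror_antipode_left_epst mirror_antipode_right_epst
        mirror_antipode_right_epss mirror_pi_bij mirror_pi_lin mirror_pi_mu mirror_pi_one
        mirror_pi_Delta mirror_eps_pi mirror_pi_comp)
qed

end
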